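(* Let $(L_n)_{n\ge1}$ and $(\gamma_n)_{n\ge1}$ be integers with $L_n>1$ and $\gamma_n>1$, and let $X$ be the rank-one subshift defined by $B_1=0$ and $B_{n+1}=\big((B_n1)^{\gamma_n}B_n\big)^{L_n}$, with $h_n$ the length of $B_n$ and $p$ its complexity. Then $p(h_2+1)=h_2\big(1+\frac{1}{L_1}\big)+1$, and for every $q>h_2$, letting $n$ be the unique integer with $h_n<q\le h_{n+1}$, $$p(q+1)-p(q)=\begin{cases}2 & h_n<q\le \big(2-\frac{1}{L_{n-1}}\big)h_n,\\ 1 & \big(2-\frac{1}{L_{n-1}}\big)h_n<q\le(\gamma_n+1)h_n+\gamma_n,\\ 2 & (\gamma_n+1)h_n+\gamma_n<q\le(2\gamma_n+1)h_n+2\gamma_n,\\ 1 & (2\gamma_n+1)h_n+2\gamma_n<q\le h_{n+1}.\end{cases}$$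
   Context: For a sequence of finite words $B_n$ over $\{0,1\}$ in which each $B_n$ is a prefix and a subword of $B_{n+1}$, the associated subshift is the set of $x\in\{0,1\}^{\mathbb Z}$ all of whose finite subwords are subwords of some $B_n$; $p(q)$ is the number of distinct words of length $q$ occurring in elements of it. *)

theory Defs
  imports Complex_Main "HOL-Library.Sublist"
begin

text \<open>Words over the alphabet {0,1} are lists of naturals with entries in {0,1};
  points of the full shift are maps int => nat with values in {0,1}.
  The word sequence is indexed from 1 (index 0 is an unused dummy).\<close>

definition window :: "(int \<Rightarrow> nat) \<Rightarrow> int \<Rightarrow> nat \<Rightarrow> nat list" where
  "window x i m = map (\<lambda>j. x (i + int j)) [0..<m]"

definition subshift :: "(nat \<Rightarrow> nat list) \<Rightarrow> (int \<Rightarrow> nat) set" where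
  "subshift Bs = {x. (\<forall>i. x i \<in> {0,1}) \<and>
      (\<forall>i m. \<exists>n\<ge>1. sublist (window x i m) (Bs n))}"

definition complexity :: "(nat \<Rightarrow> nat list) \<Rightarrow> nat \<Rightarrow> nat" where
  "complexity Bs q = card {w. length w = q \<and> (\<exists>x\<in>subshift Bs. \<exists>i. w = window x i q)}"

fun rkB :: "(nat \<Rightarrow> nat) \<Rightarrow> (nat \<Rightarrow> nat) \<Rightarrow> nat \<Rightarrow> nat list" where
  "rkB L g 0 = [0]"
| "rkB L g (Suc 0) = [0]"
| "rkB L g (Suc (Suc n)) =
     concat (replicate (L (Suc n))
       (concat (replicate (g (Suc n)) (rkB L g (Suc n) @ [1])) @ rkB L g (Suc n)))"

end

theory Submission
  imports Defs
begin

text \<open>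
  Write \<open>B n\<close> for \<open>rkB L \<gamma> n\<close>, \<open>h n\<close> for its length and \<open>B' n\<close> for the word built from the
  shifted parameters \<open>L (n + 1)\<close>, \<open>\<gamma> (n + 1)\<close>. Then \<open>B (n + 1) = \<tau> (B' n)\<close> for the morphism
  \<open>\<tau> = \<pi> \<circ> \<rho>\<close>, where \<open>\<rho>\<close> sends \<open>0\<close> to \<open>0^(L 1)\<close> and \<open>\<pi>\<close> sends \<open>0\<close> to \<open>(01)^(\<gamma> 1) 0\<close>, both fixing \<open>1\<close>.
  All \<open>B n\<close> avoid \<open>11\<close> and \<open>000\<close>, which makes \<open>\<rho>\<close> and \<open>\<pi>\<close> recognizable away from the left end
  of a word. Hence a right special word \<open>w\<close> (both \<open>w0\<close> and \<open>w1\<close> occur) is either short -- a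
  suffix of \<open>(01)^(2 \<gamma> 1) 0\<close> or of \<open>B 2 B 2\<close> -- or a suffix of \<open>\<tau> v\<close> for a right special word \<open>v\<close>
  of the shifted system. Induction on the length shows that the right special words of length
  \<open>q\<close> are the suffix of length \<open>q\<close> of the \<open>B n\<close>, the suffix of \<open>B n B n\<close> when
  \<open>h n < q \<le> (2 - 1 / L (n - 1)) h n\<close>, and the suffix of \<open>(B n 1)^(2 \<gamma> n) B n\<close> when
  \<open>(\<gamma> n + 1) h n + \<gamma> n < q \<le> (2 \<gamma> n + 1) h n + 2 \<gamma> n\<close>. Every factor extends to the right
  and the alphabet is binary, so \<open>p (q + 1) - p q\<close> is the number of right special words of
  length \<open>q\<close>.
\<close>

section \<open>Words\<close>

lemma sublist_middle: "y = ps @ xs @ zs \<Longrightarrow> sublist xs y" by auto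

lemma concat_replicate_Suc: "concat (replicate (Suc k) xs) = xs @ concat (replicate k xs)"
  by simp

lemma concat_replicate_Suc_right: "concat (replicate (Suc k) xs) = concat (replicate k xs) @ xs"
  by (induction k) auto

lemma length_concat_replicate: "length (concat (replicate k xs)) = k * length xs"
  by (simp add: length_concat sum_list_replicate)

lemma concat_replicate_middle:
  "concat (replicate a Y) @ Y @ concat (replicate b Y) = Y @ concat (replicate (a + b) Y)"
  by (induction a) auto

lemma suffix_concat_replicate_mono:
  "j \<le> M \<Longrightarrow> suffix (concat (replicate j X)) (concat (replicate M X))"
  by (metis concat_append le_add_diff_inverse2 replicate_add suffixI)

lemma suffix_replicate_mono: "m \<le> n \<Longrightarrow> suffix (replicate m a) (replicate n a)"
  by (metis le_add_diff_inverse2 replicate_add suffixI)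

lemma last_four: "4 \<le> length xs \<Longrightarrow> \<exists>ys a b c d. xs = ys @ [a,b,c,d]"
proof (induction xs)
  case Nil then show ?case by simp
next
  case (Cons x xs)
  show ?case
  proof (cases "4 \<le> length xs")
    case True
    then obtain ys a b c d where "xs = ys @ [a,b,c,d]" using Cons.IH by blast
    then show ?thesis by (intro exI[of _ "x # ys"]) auto
  next
    case False
    then have "length xs = 3" using Cons.prems by simp
    then obtain a b c where "xs = [a,b,c]" by (auto simp: numeral_eq_Suc length_Suc_conv)
    then show ?thesis by (intro exI[of _ "[]"]) auto
  qed
qed

lemma sublist_pair_append: "sublist [a, b] (X @ Y) \<Longrightarrow>
   sublist [a, b] X \<or> sublist [a, b] Y \<or> (X \<noteq> [] \<and> Y \<noteq> [] \<and> last X = a \<and> hd Y = b)"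
  by (auto simp: sublist_append Cons_eq_append_conv suffix_def prefix_def)

lemma sublist_triple_append: "sublist [a, b, c] (X @ Y) \<Longrightarrow>
   sublist [a, b, c] X \<or> sublist [a, b, c] Y \<or> (suffix [a, b] X \<and> Y \<noteq> [] \<and> hd Y = c)
   \<or> (X \<noteq> [] \<and> last X = a \<and> prefix [b, c] Y)"
  by (auto simp: sublist_append Cons_eq_append_conv suffix_def prefix_def)

lemma sublist_too_long[simp]:
  "\<not> sublist (a # b # xs) [c]" "\<not> sublist (a # b # c # xs) [d, e]"
  by (auto dest: sublist_length_le)

lemma sublist_pair_pair[simp]: "sublist [a,b] [c,d] \<longleftrightarrow> (a = c \<and> b = d)"
  by (auto simp: sublist_Cons_right prefix_def)

lemma prefix_pair_append:
  "X \<noteq> [] \<Longrightarrow> prefix [a,b] (X @ Y) \<Longrightarrow> prefix [a,b] X \<or> (X = [a] \<and> Y \<noteq> [] \<and> hd Y = b)"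
proof -
  assume "X \<noteq> []" "prefix [a,b] (X @ Y)"
  then obtain x xs where X: "X = x # xs" by (cases X) auto
  show ?thesis
  proof (cases xs)
    case Nil then show ?thesis using \<open>prefix [a,b] (X @ Y)\<close> X by (cases Y) (auto simp: prefix_def)
  next
    case (Cons y ys) then show ?thesis using \<open>prefix [a,b] (X @ Y)\<close> X by (auto simp: prefix_def)
  qed
qed

lemma suffix_pair_append:
  "Y \<noteq> [] \<Longrightarrow> suffix [a,b] (X @ Y) \<Longrightarrow> suffix [a,b] Y \<or> (Y = [b] \<and> X \<noteq> [] \<and> last X = a)"
proof -
  assume "Y \<noteq> []" "suffix [a,b] (X @ Y)"
  then have "prefix [b,a] (rev Y @ rev X)" by (simp add: suffix_to_prefix)
  from prefix_pair_append[OF _ this] \<open>Y \<noteq> []\<close> show ?thesis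
    by (auto simp: suffix_to_prefix hd_rev last_rev)
qed

definition lastn :: "nat \<Rightarrow> nat list \<Rightarrow> nat list" where
  "lastn q xs = drop (length xs - q) xs"

lemma lastn_suffix: "suffix w xs \<Longrightarrow> lastn (length w) xs = w"
  by (auto simp: lastn_def suffix_def)

lemma suffix_lastn: "suffix (lastn q xs) xs" by (simp add: lastn_def suffix_drop)

lemma length_lastn: "q \<le> length xs \<Longrightarrow> length (lastn q xs) = q"
  by (simp add: lastn_def)

lemma suffix_same_length_eq:
  "suffix a xs \<Longrightarrow> suffix b xs \<Longrightarrow> length a = length b \<Longrightarrow> a = b"
  by (metis suffix_length_suffix suffix_order.antisym order_refl)

lemma lastn_append:
  "length Y \<le> q \<Longrightarrow> q \<le> length X + length Y \<Longrightarrow> lastn q (X @ Y) = lastn (q - length Y) X @ Y"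
  by (simp add: lastn_def)

lemma last_lastn:
  "1 \<le> k \<Longrightarrow> k \<le> length X \<Longrightarrow> last (lastn k X) = last X"
  by (simp add: lastn_def)

lemma lastn_append_right: "q \<le> length ys \<Longrightarrow> lastn q (xs @ ys) = lastn q ys"
  by (simp add: lastn_def)

lemma lastn_append_ne:
  assumes "length Y < q" "q \<le> length (xs @ Y)" "q \<le> length (ys @ Y)" and "last xs \<noteq> last ys"
  shows "lastn q (xs @ Y) \<noteq> lastn q (ys @ Y)"
proof -
  have "last (lastn (q - length Y) xs) = last xs" "last (lastn (q - length Y) ys) = last ys"
    using assms(1-3) by (simp_all add: last_lastn)
  then show ?thesis using assms by (auto simp: lastn_append)
qed

definition trailing_zeros :: "nat list \<Rightarrow> nat" where
  "trailing_zeros xs = length (takeWhile (\<lambda>x. x = 0) (rev xs))"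

lemma trailing_zeros_snoc_0[simp]: "trailing_zeros (xs @ [0]) = Suc (trailing_zeros xs)"
  by (simp add: trailing_zeros_def)

lemma trailing_zeros_snoc_nonzero: "a \<noteq> 0 \<Longrightarrow> trailing_zeros (xs @ [a]) = 0"
  by (simp add: trailing_zeros_def)

lemma trailing_zeros_Nil[simp]: "trailing_zeros [] = 0" by (simp add: trailing_zeros_def)

lemma trailing_zeros_append_replicate: "trailing_zeros (xs @ replicate k 0) = trailing_zeros xs + k"
  unfolding trailing_zeros_def by (simp, subst takeWhile_append2) auto

lemma trailing_zeros_append_nonzero:
  "x \<in> set ys \<Longrightarrow> x \<noteq> 0 \<Longrightarrow> trailing_zeros (xs @ ys) = trailing_zeros ys"
  unfolding trailing_zeros_def by (simp add: takeWhile_append1)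

lemma suffix_replicate_trailing_zeros: "suffix (replicate (trailing_zeros xs) 0) xs"
proof -
  define tw where "tw = takeWhile (\<lambda>x. x = (0::nat)) (rev xs)"
  define dw where "dw = dropWhile (\<lambda>x. x = (0::nat)) (rev xs)"
  have r: "rev xs = tw @ dw" by (simp add: tw_def dw_def)
  have "\<forall>y\<in>set tw. y = 0" unfolding tw_def by (auto dest: set_takeWhileD)
  then have "replicate (length tw) 0 = tw" by (rule replicate_length_same)
  then have tw: "tw = replicate (trailing_zeros xs) 0" by (simp add: trailing_zeros_def tw_def)
  have "xs = rev (rev xs)" by simp
  also have "\<dots> = rev dw @ replicate (trailing_zeros xs) 0" by (simp add: r tw)
  finally show ?thesis by (rule suffixI)
qed

lemma last_nonzero_trailing_zeros_0:
  "trailing_zeros u = 0 \<Longrightarrow> u \<noteq> [] \<Longrightarrow> last u \<noteq> 0"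
proof (cases u rule: rev_cases)
  case (snoc ys y)
  assume "trailing_zeros u = 0"
  then show ?thesis using snoc by (cases "y = 0") simp_all
qed simp

section \<open>Morphisms\<close>

definition morph :: "(nat \<Rightarrow> nat list) \<Rightarrow> nat list \<Rightarrow> nat list" where
  "morph f xs = concat (map f xs)"

lemma morph_Nil[simp]: "morph f [] = []" and morph_Cons[simp]: "morph f (a#xs) = f a @ morph f xs"
  and morph_append[simp]: "morph f (xs @ ys) = morph f xs @ morph f ys"
  by (simp_all add: morph_def)

lemma morph_concat_replicate[simp]:
  "morph f (concat (replicate n xs)) = concat (replicate n (morph f xs))"
  by (induction n) auto

lemma morph_suffix: "suffix xs ys \<Longrightarrow> suffix (morph f xs) (morph f ys)"
  by (auto simp: suffix_def)

lemma morph_replicate: "morph f (replicate n a) = concat (replicate n (f a))"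
  by (induction n) auto

lemma morph_eq_append_Cons:
  "morph f y = xs @ c # ys \<Longrightarrow>
   \<exists>ya t yb k. y = ya @ t # yb \<and> xs = morph f ya @ take k (f t) \<and> k < length (f t) \<and> c = f t ! k"
proof (induction y arbitrary: xs)
  case Nil then show ?case by simp
next
  case (Cons a y)
  show ?case
  proof (cases "length xs < length (f a)")
    case True
    have e: "f a @ morph f y = xs @ c # ys" using Cons.prems by simp
    then have "take (length xs) (f a) = xs" using True
      by (metis append_eq_append_conv_if append_take_drop_id take_append length_take min_absorb1 le_less)
    moreover have "f a ! length xs = c" using True e
      by (metis nth_append nth_append_length)
    ultimately show ?thesis using True
      by (intro exI[of _ "[]"] exI[of _ a] exI[of _ y] exI[of _ "length xs"]) auto
  next
    case False
    have e: "f a @ morph f y = xs @ c # ys" using Cons.prems by simp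
    then obtain xs' where xs': "xs = f a @ xs'" using False
      by (metis append_eq_append_conv_if append_take_drop_id not_less)
    then have "morph f y = xs' @ c # ys" using e by simp
    from Cons.IH[OF this] obtain ya t yb k where
      "y = ya @ t # yb" "xs' = morph f ya @ take k (f t)" "k < length (f t)" "c = f t ! k" by blast
    then show ?thesis using xs'
      by (intro exI[of _ "a # ya"] exI[of _ t] exI[of _ yb] exI[of _ k]) auto
  qed
qed

lemma shortest_suffix_morph: "suffix w (morph f v) \<Longrightarrow>
  \<exists>v'. suffix v' v \<and> suffix w (morph f v') \<and> (v' \<noteq> [] \<longrightarrow> length (morph f (tl v')) < length w)"
proof (induction v)
  case Nil then show ?case by (intro exI[of _ "[]"]) auto
next
  case (Cons a v)
  show ?case
  proof (cases "suffix w (morph f v)")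
    case True
    from Cons.IH[OF True] obtain v' where "suffix v' v" "suffix w (morph f v')"
      "v' \<noteq> [] \<longrightarrow> length (morph f (tl v')) < length w" by blast
    then show ?thesis by (intro exI[of _ v']) (auto intro: suffix_ConsI)
  next
    case False
    have s1: "suffix (morph f v) (morph f (a # v))" by (simp add: suffix_def)
    have "\<not> length w \<le> length (morph f v)"
      using suffix_length_suffix[OF Cons.prems s1] False by blast
    then show ?thesis using Cons.prems by (intro exI[of _ "a # v"]) auto
  qed
qed

lemma common_suffix_morph:
  assumes f: "\<And>a b. a \<in> {0, 1} \<Longrightarrow> b \<in> {0, 1} \<Longrightarrow> f a \<noteq> [] \<and> (last (f a) = last (f b) \<longrightarrow> a = b)"
  shows "set ya \<subseteq> {0, 1} \<Longrightarrow> set yb \<subseteq> {0, 1} \<Longrightarrow> suffix w (morph f ya) \<Longrightarrow> suffix w (morph f yb) \<Longrightarrow>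
    \<exists>u. suffix u ya \<and> suffix u yb \<and> suffix w (morph f u)"
proof (induction ya arbitrary: yb w rule: rev_induct)
  case (snoc a ya)
  show ?case
  proof (cases "w = []")
    case False
    then obtain yb' b where yb: "yb = yb' @ [b]" using snoc.prems(4) by (cases yb rule: rev_cases) auto
    have ab: "a \<in> {0, 1}" "b \<in> {0, 1}" using snoc.prems(1,2) yb by auto
    have wa: "suffix w (morph f ya @ f a)" and wb: "suffix w (morph f yb' @ f b)"
      using snoc.prems(3,4) yb by simp_all
    obtain za zb where "morph f ya @ f a = za @ w" "morph f yb' @ f b = zb @ w"
      using wa wb by (auto simp: suffix_def)
    then have "last w = last (f a)" "last w = last (f b)"
      using False f[OF ab(1) ab(1)] f[OF ab(2) ab(2)] by (metis last_appendR)+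
    then have "b = a" using f[OF ab] by simp
    show ?thesis
    proof (cases "suffix w (f a)")
      case True
      then show ?thesis using yb \<open>b = a\<close> by (intro exI[of _ "[a]"]) auto
    next
      case False
      then obtain w' where "w = w' @ f a" "suffix w' (morph f ya)" "suffix w' (morph f yb')"
        using wa wb \<open>b = a\<close> by (auto simp: suffix_append)
      moreover from this snoc.IH[of yb' w'] snoc.prems(1,2) yb
      obtain u where "suffix u ya" "suffix u yb'" "suffix w' (morph f u)" by auto
      ultimately show ?thesis using yb \<open>b = a\<close> by (intro exI[of _ "u @ [a]"]) (auto simp: suffix_def)
    qed
  qed (intro exI[of _ "[]"], simp)
qed (intro exI[of _ "[]"], simp)

lemma common_suffix_morph_extension:
  assumes f: "\<And>a b. a \<in> {0, 1} \<Longrightarrow> b \<in> {0, 1} \<Longrightarrow> f a \<noteq> [] \<and> (last (f a) = last (f b) \<longrightarrow> a = b)"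
    and y0: "y0 = ya0 @ c0 # yb0" and y1: "y1 = ya1 @ c1 # yb1"
    and b0: "set y0 \<subseteq> {0, 1}" and b1: "set y1 \<subseteq> {0, 1}"
    and s0: "suffix w (morph f ya0)" and s1: "suffix w (morph f ya1)"
  shows "\<exists>u. sublist (u @ [c0]) y0 \<and> sublist (u @ [c1]) y1 \<and> suffix w (morph f u)"
proof -
  have "set ya0 \<subseteq> {0, 1}" "set ya1 \<subseteq> {0, 1}" using b0 b1 y0 y1 by auto
  from common_suffix_morph[OF f this s0 s1] obtain u
    where u: "suffix u ya0" "suffix u ya1" "suffix w (morph f u)" by blast
  then obtain p0 p1 where "y0 = p0 @ (u @ [c0]) @ yb0" "y1 = p1 @ (u @ [c1]) @ yb1"
    using y0 y1 by (auto simp: suffix_def)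
  then show ?thesis using u(3) by (blast intro: sublist_middle)
qed

section \<open>The rank-one words\<close>

definition shift_seq :: "(nat \<Rightarrow> nat) \<Rightarrow> nat \<Rightarrow> nat" where
  "shift_seq f n = f (Suc n)"

lemma shift_seq_apply[simp]: "shift_seq f n = f (Suc n)" by (simp add: shift_seq_def)

definition admissible :: "(nat \<Rightarrow> nat) \<Rightarrow> (nat \<Rightarrow> nat) \<Rightarrow> bool" where
  "admissible L g \<longleftrightarrow> (\<forall>n\<ge>1. 2 \<le> L n \<and> 1 \<le> g n)"

lemma admissibleD:
  assumes "admissible L g" and "1 \<le> n"
  shows "2 \<le> L n" and "1 \<le> g n"
  using assms by (simp_all add: admissible_def)

lemma admissible_shift_seq:
  "admissible L g \<Longrightarrow> admissible (shift_seq L) (shift_seq g)"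
  by (simp add: admissible_def shift_seq_def)

definition block :: "(nat \<Rightarrow> nat) \<Rightarrow> (nat \<Rightarrow> nat) \<Rightarrow> nat \<Rightarrow> nat list" where
  "block L g n = concat (replicate (g n) (rkB L g n @ [1])) @ rkB L g n"

lemma rkB_Suc_block:
  "1 \<le> n \<Longrightarrow> rkB L g (Suc n) = concat (replicate (L n) (block L g n))"
  by (cases n) (auto simp: block_def)

lemma set_rkB: "set (rkB L g n) \<subseteq> {0,1}"
proof (induction L g n rule: rkB.induct)
  case (3 L g n)
  then show ?case by (auto simp del: rkB.simps simp: rkB.simps(3))
qed auto

lemma rkB_Suc_ends_0: assumes "admissible L g"
  shows "rkB L g (Suc m) \<noteq> [] \<and> hd (rkB L g (Suc m)) = 0 \<and> last (rkB L g (Suc m)) = 0"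
proof (induction m)
  case 0 then show ?case by simp
next
  case (Suc m)
  have "2 \<le> L (Suc m)" using assms by (auto simp: admissible_def)
  then obtain k where k: "L (Suc m) = Suc k" by (cases "L (Suc m)") auto
  have e1: "rkB L g (Suc (Suc m)) = concat (replicate (L (Suc m))
     (concat (replicate (g (Suc m)) (rkB L g (Suc m) @ [1])) @ rkB L g (Suc m)))"
    by (rule rkB.simps(3))
  define Q where "Q = concat (replicate (g (Suc m)) (rkB L g (Suc m) @ [1])) @ rkB L g (Suc m)"
  have Q: "Q \<noteq> [] \<and> hd Q = 0 \<and> last Q = 0" using Suc
    by (cases "g (Suc m)") (auto simp: Q_def)
  have "rkB L g (Suc (Suc m)) = Q @ concat (replicate k Q)" unfolding e1 k Q_def by simp
  moreover have "rkB L g (Suc (Suc m)) = concat (replicate k Q) @ Q" unfolding e1 k Q_def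
    by (rule concat_replicate_Suc_right)
  ultimately show ?case using Q by (metis append_is_Nil_conv hd_append last_appendR)
qed

lemma rkB_ends_0: assumes "admissible L g"
  shows "rkB L g n \<noteq> [] \<and> hd (rkB L g n) = 0 \<and> last (rkB L g n) = 0"
  using rkB_Suc_ends_0[OF assms, of "n - 1"] by (cases n) auto

lemma rkB_ne: "admissible L g \<Longrightarrow> rkB L g n \<noteq> []" using rkB_ends_0 by blast

lemma length_rkB_pos: "admissible L g \<Longrightarrow> 1 \<le> length (rkB L g n)"
  using rkB_ne by (cases "rkB L g n") auto

lemma block_starts:
  "1 \<le> g n \<Longrightarrow> \<exists>r. block L g n = rkB L g n @ [1] @ rkB L g n @ r"
proof -
  assume "1 \<le> g n"
  then obtain k where "g n = Suc k" by (cases "g n") auto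
  then show ?thesis
    by (cases k) (auto simp: block_def)
qed

lemma block_ends:
  "1 \<le> g n \<Longrightarrow> \<exists>r. block L g n = r @ rkB L g n @ [1] @ rkB L g n"
proof -
  assume "1 \<le> g n"
  then obtain k where "g n = Suc k" by (cases "g n") auto
  then show ?thesis
    unfolding block_def \<open>g n = Suc k\<close> concat_replicate_Suc_right by auto
qed

lemma block_ends_0:
  assumes "admissible L g"
  shows "block L g n \<noteq> [] \<and> hd (block L g n) = 0 \<and> last (block L g n) = 0"
  using rkB_ends_0[OF assms, of n] by (cases "g n") (auto simp: block_def)

lemma rkB_Suc_starts: assumes "admissible L g" "1 \<le> n"
  shows "\<exists>r. rkB L g (Suc n) = rkB L g n @ [1] @ rkB L g n @ r"
proof -
  from assms have "2 \<le> L n" "1 \<le> g n" by (auto simp: admissible_def)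
  then obtain k where k: "L n = Suc k" by (cases "L n") auto
  obtain r where "block L g n = rkB L g n @ [1] @ rkB L g n @ r" using block_starts \<open>1 \<le> g n\<close> by blast
  then show ?thesis using rkB_Suc_block[OF assms(2)] k by auto
qed

lemma prefix_rkB_Suc: assumes "admissible L g" shows "prefix (rkB L g n) (rkB L g (Suc n))"
proof (cases "n = 0")
  case True then show ?thesis by simp
next
  case False
  then obtain r where "rkB L g (Suc n) = rkB L g n @ [1] @ rkB L g n @ r"
    using rkB_Suc_starts[OF assms, of n] by auto
  then show ?thesis by (simp add: prefix_def)
qed

lemma prefix_rkB_mono: assumes "admissible L g" "n \<le> m" shows "prefix (rkB L g n) (rkB L g m)"
  using assms(2)
proof (induction m)
  case 0 then show ?case by simp
next
  case (Suc m)
  then show ?case using prefix_rkB_Suc[OF assms(1), of m]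
    by (metis le_Suc_eq prefix_order.order_refl prefix_order.trans)
qed

lemma rkB_Suc_ends: assumes "admissible L g" "1 \<le> n"
  shows "\<exists>r. rkB L g (Suc n) = r @ rkB L g n @ [1] @ rkB L g n"
proof -
  from assms have "2 \<le> L n" "1 \<le> g n" by (auto simp: admissible_def)
  then obtain k where k: "L n = Suc k" by (cases "L n") auto
  obtain r where r: "block L g n = r @ rkB L g n @ [1] @ rkB L g n" using block_ends \<open>1 \<le> g n\<close> by blast
  have "rkB L g (Suc n) = concat (replicate k (block L g n)) @ block L g n"
    using rkB_Suc_block[OF assms(2)] k concat_replicate_Suc_right by metis
  then show ?thesis unfolding r by (metis append.assoc)
qed

lemma suffix_rkB_Suc: assumes "admissible L g" shows "suffix (rkB L g n) (rkB L g (Suc n))"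
proof (cases "n = 0")
  case True then show ?thesis by (simp add: suffix_def)
next
  case False
  then obtain r where "rkB L g (Suc n) = r @ rkB L g n @ [1] @ rkB L g n"
    using rkB_Suc_ends[OF assms, of n] by auto
  then show ?thesis by (simp add: suffix_def)
qed

lemma suffix_rkB_mono: assumes "admissible L g" "n \<le> m" shows "suffix (rkB L g n) (rkB L g m)"
  using assms(2)
proof (induction m)
  case 0 then show ?case by simp
next
  case (Suc m)
  then show ?case using suffix_rkB_Suc[OF assms(1), of m]
    by (metis le_Suc_eq suffix_order.order_refl suffix_order.trans)
qed

lemma rkB_Suc_ends_block_block: assumes "admissible L g" "1 \<le> n"
  shows "\<exists>r. rkB L g (Suc n) = r @ block L g n @ block L g n"
proof -
  have "2 \<le> L n" using assms by (simp add: admissible_def)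
  define k where "k = L n - 2"
  have k: "L n = Suc (Suc k)" using \<open>2 \<le> L n\<close> by (simp add: k_def)
  have "rkB L g (Suc n) = concat (replicate k (block L g n)) @ block L g n @ block L g n"
    unfolding rkB_Suc_block[OF assms(2)] k concat_replicate_Suc_right by simp
  then show ?thesis by blast
qed

lemma rkB_Suc_starts_block_block: assumes "admissible L g" "1 \<le> n"
  shows "\<exists>r. rkB L g (Suc n) = block L g n @ block L g n @ r"
proof -
  have "2 \<le> L n" using assms by (simp add: admissible_def)
  define k where "k = L n - 2"
  have k: "L n = Suc (Suc k)" using \<open>2 \<le> L n\<close> by (simp add: k_def)
  have "rkB L g (Suc n) = block L g n @ block L g n @ concat (replicate k (block L g n))"
    using rkB_Suc_block[OF assms(2)] k by simp
  then show ?thesis by blast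
qed

lemma rkB_rkB_block_power:
  assumes adm: "admissible L g" and n: "2 \<le> n"
  defines "P \<equiv> block L g (n - 1)" and "k \<equiv> 2 * L (n - 1) - 1"
  shows "rkB L g n @ rkB L g n = P @ concat (replicate k P)"
    and "rkB L g n @ rkB L g n = concat (replicate k P) @ P"
proof -
  have "1 \<le> n - 1" using n by simp
  with adm have "2 \<le> L (n - 1)" unfolding admissible_def by blast
  then have "L (n - 1) + L (n - 1) = Suc k" by (simp add: k_def)
  moreover have "rkB L g n = concat (replicate (L (n - 1)) P)"
    using rkB_Suc_block[of "n - 1" L g] n by (simp add: P_def)
  ultimately have BB: "rkB L g n @ rkB L g n = concat (replicate (Suc k) P)"
    by (metis concat_append replicate_add)
  then show "rkB L g n @ rkB L g n = P @ concat (replicate k P)" by simp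
  from BB show "rkB L g n @ rkB L g n = concat (replicate k P) @ P"
    by (simp only: concat_replicate_Suc_right)
qed

lemma length_rkB_Suc:
  "1 \<le> n \<Longrightarrow> length (rkB L g (Suc n)) = L n * ((g n + 1) * length (rkB L g n) + g n)"
  by (simp add: rkB_Suc_block block_def length_concat sum_list_replicate algebra_simps)

lemma length_block: "length (block L g n) = (g n + 1) * length (rkB L g n) + g n"
  by (simp add: block_def length_concat_replicate algebra_simps)

lemma length_rkB_Suc_ge_double: assumes "admissible L g" "1 \<le> n"
  shows "2 * length (rkB L g n) + 1 \<le> length (rkB L g (Suc n))"
proof -
  from assms have "2 \<le> L n" "1 \<le> g n" by (auto simp: admissible_def)
  have "1 * length (rkB L g n) \<le> g n * length (rkB L g n)"
    using \<open>1 \<le> g n\<close> by (rule mult_le_mono1)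
  then have "2 * length (rkB L g n) + 1 \<le> 1 * ((g n + 1) * length (rkB L g n) + g n)"
    using \<open>1 \<le> g n\<close> by (simp only: mult_1 distrib_right mult_1_left)
  also have "\<dots> \<le> L n * ((g n + 1) * length (rkB L g n) + g n)"
    using \<open>2 \<le> L n\<close> by (intro mult_right_mono) auto
  finally show ?thesis using length_rkB_Suc[OF assms(2)] by simp
qed

lemma length_rkB_Suc_ge: assumes "admissible L g" "1 \<le> n"
  shows "(2 * g n + 1) * length (rkB L g n) + 2 * g n \<le> length (rkB L g (Suc n))"
proof -
  have "2 \<le> L n" using assms by (simp add: admissible_def)
  have "(2 * g n + 1) * length (rkB L g n) + 2 * g n \<le> 2 * ((g n + 1) * length (rkB L g n) + g n)"
    by (simp add: algebra_simps)
  also have "\<dots> \<le> L n * ((g n + 1) * length (rkB L g n) + g n)" using \<open>2 \<le> L n\<close> by (rule mult_le_mono1)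
  finally show ?thesis using length_rkB_Suc[OF assms(2)] by simp
qed

lemma length_rkB_ge: assumes "admissible L g" shows "n \<le> length (rkB L g n)"
proof (induction n)
  case 0 then show ?case by simp
next
  case (Suc n)
  show ?case
  proof (cases "n = 0")
    case True then show ?thesis by simp
  next
    case False
    then show ?thesis using length_rkB_Suc_ge_double[OF assms, of n] Suc length_rkB_pos[OF assms, of n] by simp
  qed
qed

lemma length_rkB_mono:
  assumes "admissible L g" "n \<le> m"
  shows "length (rkB L g n) \<le> length (rkB L g m)"
  using prefix_length_le[OF prefix_rkB_mono[OF assms]] .

definition zigzag :: "nat \<Rightarrow> nat list" where
  "zigzag n = concat (replicate n [0,1]) @ [0]"

lemma length_zigzag: "length (zigzag n) = 2 * n + 1"
  by (simp add: zigzag_def length_concat sum_list_replicate)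

lemma zigzag_Cons: "zigzag n = 0 # concat (replicate n [1,0])"
  by (induction n) (auto simp: zigzag_def)

lemma suffix_zigzag_mono: "m \<le> n \<Longrightarrow> suffix (zigzag m) (zigzag n)"
proof (induction n)
  case 0 then show ?case by simp
next
  case (Suc n)
  then show ?case
    by (cases "m = Suc n") (auto simp: zigzag_def suffix_def intro: suffix_ConsI)
qed

lemma zigzag_avoids_00: "\<not> sublist [0,0] (zigzag n)"
proof (induction n)
  case 0 then show ?case by (simp add: zigzag_def)
next
  case (Suc n)
  have "zigzag (Suc n) = [0,1] @ zigzag n" by (simp add: zigzag_def)
  then show ?case using Suc sublist_pair_append[of 0 0 "[0,1]" "zigzag n"]
    by (auto simp: dest: sublist_length_le)
qed

definition block1 :: "(nat \<Rightarrow> nat) \<Rightarrow> nat list" where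
  "block1 g = concat (replicate (g 1) [0,1]) @ [0]"

lemma block1_zigzag: "block1 g = zigzag (g 1)" by (simp add: block1_def zigzag_def)

lemma rkB_2: "rkB L g 2 = concat (replicate (L 1) (block1 g))"
  by (simp add: numeral_2_eq_2 block1_def)

lemma suffix_block1_rkB_2:
  assumes "admissible L g" shows "suffix (block1 g) (rkB L g 2)"
proof -
  obtain l where "L 1 = Suc l" using assms by (cases "L 1") (auto simp: admissible_def)
  then have "rkB L g 2 = concat (replicate l (block1 g)) @ block1 g"
    unfolding rkB_2 by (metis concat_replicate_Suc_right)
  then show ?thesis by (rule suffixI)
qed

section \<open>Desubstitution\<close>

definition subst_pi :: "(nat \<Rightarrow> nat) \<Rightarrow> nat \<Rightarrow> nat list" where
  "subst_pi g a = (if a = 0 then block1 g else [1])"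

definition subst_rho :: "(nat \<Rightarrow> nat) \<Rightarrow> nat \<Rightarrow> nat list" where
  "subst_rho L a = (if a = 0 then replicate (L 1) 0 else [1])"

definition subst_tau :: "(nat \<Rightarrow> nat) \<Rightarrow> (nat \<Rightarrow> nat) \<Rightarrow> nat \<Rightarrow> nat list" where
  "subst_tau L g a = (if a = 0 then rkB L g 2 else [1])"

lemma morph_pi_morph_rho: "morph (subst_pi g) (morph (subst_rho L) xs) = morph (subst_tau L g) xs"
  by (induction xs) (auto simp: subst_pi_def subst_rho_def subst_tau_def morph_replicate rkB_2)

lemma rkB_Suc_Suc_morph_tau:
  "rkB L g (Suc (Suc m)) = morph (subst_tau L g) (rkB (shift_seq L) (shift_seq g) (Suc m))"
proof (induction m)
  case 0
  then show ?case by (simp add: subst_tau_def numeral_2_eq_2)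
next
  case (Suc m)
  have e1: "rkB L g (Suc (Suc (Suc m))) = concat (replicate (L (Suc (Suc m)))
     (concat (replicate (g (Suc (Suc m))) (rkB L g (Suc (Suc m)) @ [1])) @ rkB L g (Suc (Suc m))))"
    by (rule rkB.simps(3))
  have e2: "rkB (shift_seq L) (shift_seq g) (Suc (Suc m)) = concat (replicate (shift_seq L (Suc m))
     (concat (replicate (shift_seq g (Suc m)) (rkB (shift_seq L) (shift_seq g) (Suc m) @ [1])) @ rkB (shift_seq L) (shift_seq g) (Suc m)))"
    by (rule rkB.simps(3))
  show ?case
    unfolding e1 e2 Suc morph_concat_replicate morph_append by (simp add: subst_tau_def shift_seq_def)
qed

lemma rkB_Suc_morph_tau:
  "1 \<le> n \<Longrightarrow> rkB L g (Suc n) = morph (subst_tau L g) (rkB (shift_seq L) (shift_seq g) n)"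
  using rkB_Suc_Suc_morph_tau[of L g "n - 1"] by (cases n) auto

lemma subst_pi_0[simp]:
  "subst_pi g 0 = block1 g" and subst_pi_1[simp]: "a \<noteq> 0 \<Longrightarrow> subst_pi g a = [1]"
  by (simp_all add: subst_pi_def)

lemma subst_pi_last_inj:
  "a \<in> {0,1} \<Longrightarrow> b \<in> {0,1} \<Longrightarrow> subst_pi g a \<noteq> [] \<and> (last (subst_pi g a) = last (subst_pi g b) \<longrightarrow> a = b)"
  by (auto simp: subst_pi_def block1_def)

lemma subst_rho_last_inj:
  "1 \<le> L 1 \<Longrightarrow> a \<in> {0,1} \<Longrightarrow> b \<in> {0,1} \<Longrightarrow> subst_rho L a \<noteq> [] \<and> (last (subst_rho L a) = last (subst_rho L b) \<longrightarrow> a = b)"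
  by (auto simp: subst_rho_def)

lemma hd_morph_rho:
  "z \<noteq> [] \<Longrightarrow> 1 \<le> L 1 \<Longrightarrow> hd (morph (subst_rho L) z) = (if hd z = 0 then 0 else 1)"
  by (cases z; cases "L 1") (auto simp: subst_rho_def)

lemma trailing_zeros_morph_rho: "trailing_zeros (morph (subst_rho L) z) = L 1 * trailing_zeros z"
proof (induction z rule: rev_induct)
  case Nil then show ?case by (simp add: morph_def)
next
  case (snoc a z)
  show ?case
  proof (cases "a = 0")
    case True
    then show ?thesis using snoc by (simp add: subst_rho_def trailing_zeros_append_replicate)
  next
    case False
    then show ?thesis by (simp add: subst_rho_def trailing_zeros_snoc_nonzero)
  qed
qed

section \<open>Forbidden factors\<close>

definition avoids_11_000 :: "nat list \<Rightarrow> bool" where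
  "avoids_11_000 z \<longleftrightarrow> set z \<subseteq> {0,1} \<and> \<not> sublist [1,1] z \<and> \<not> sublist [0,0,0] z"

definition avoids_11_101 :: "nat list \<Rightarrow> bool" where
  "avoids_11_101 z \<longleftrightarrow> set z \<subseteq> {0,1} \<and> \<not> sublist [1,1] z \<and> \<not> sublist [1,0,1] z"

definition zero_framed :: "nat list \<Rightarrow> bool" where
  "zero_framed X \<longleftrightarrow> avoids_11_000 X \<and> X \<noteq> [] \<and> hd X = 0 \<and> last X = 0 \<and> \<not> prefix [0,0] X \<and> \<not> suffix [0,0] X"

lemma avoids_11_000_append: assumes "avoids_11_000 X" "avoids_11_000 Y"
  "\<not> (X \<noteq> [] \<and> Y \<noteq> [] \<and> last X = 1 \<and> hd Y = 1)"
  "\<not> (suffix [0,0] X \<and> Y \<noteq> [] \<and> hd Y = 0)"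
  "\<not> (X \<noteq> [] \<and> last X = 0 \<and> prefix [0,0] Y)"
  shows "avoids_11_000 (X @ Y)"
  using assms sublist_pair_append[of 1 1 X Y] sublist_triple_append[of 0 0 0 X Y] unfolding avoids_11_000_def by auto

lemma avoids_11_000_concat_replicate_snoc_1: assumes "zero_framed B"
  shows "avoids_11_000 (concat (replicate k (B @ [1])))"
proof (induction k)
  case 0 then show ?case by (simp add: avoids_11_000_def)
next
  case (Suc k)
  have ZB1: "avoids_11_000 (B @ [1])"
    using assms by (intro avoids_11_000_append) (auto simp: zero_framed_def avoids_11_000_def prefix_def)
  have hdW: "concat (replicate k (B @ [1])) \<noteq> [] \<Longrightarrow> hd (concat (replicate k (B @ [1]))) = 0"
    using assms by (cases k) (auto simp: zero_framed_def)
  have pW: "\<not> prefix [0,0] (concat (replicate k (B @ [1])))"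
  proof
    assume pp: "prefix [0,0] (concat (replicate k (B @ [1])))"
    then obtain k' where k: "k = Suc k'" by (cases k) auto
    have "prefix [0,0] (B @ ([1] @ concat (replicate k' (B @ [1]))))" using pp k by simp
    from prefix_pair_append[OF _ this] assms show False by (auto simp: zero_framed_def)
  qed
  have sB1: "\<not> suffix [0,0] (B @ [1])" by (auto simp: suffix_def)
  have e: "concat (replicate (Suc k) (B @ [1])) = (B @ [1]) @ concat (replicate k (B @ [1]))" by simp
  show ?case unfolding e by (rule avoids_11_000_append[OF ZB1 Suc.IH]) (use hdW pW sB1 in auto)
qed

lemma zero_framed_block_step: assumes "zero_framed B" "1 \<le> k"
  shows "zero_framed (concat (replicate k (B @ [1])) @ B)"
proof -
  define W where "W = concat (replicate k (B @ [1]))"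
  obtain k' where k: "k = Suc k'" using assms(2) by (cases k) auto
  have W: "W = B @ [1] @ concat (replicate k' (B @ [1]))" by (simp add: W_def k)
  have W2: "W = concat (replicate k' (B @ [1])) @ B @ [1]" unfolding W_def k concat_replicate_Suc_right by simp
  have lastW: "last W = 1" using W2 by simp
  have ZW: "avoids_11_000 W" unfolding W_def using avoids_11_000_concat_replicate_snoc_1[OF assms(1)] .
  have nsW: "\<not> suffix [0,0] W" using lastW by (auto simp: suffix_def)
  have Z: "avoids_11_000 (W @ B)"
    using assms(1) lastW W nsW by (intro avoids_11_000_append[OF ZW]) (auto simp: zero_framed_def)
  have ne: "W @ B \<noteq> []" using W by simp
  have hd: "hd (W @ B) = 0" using W assms(1) by (auto simp: zero_framed_def)
  have lst: "last (W @ B) = 0" using assms(1) by (auto simp: zero_framed_def)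
  have np: "\<not> prefix [0,0] (W @ B)"
  proof
    assume "prefix [0,0] (W @ B)"
    then have "prefix [0,0] (B @ ([1] @ concat (replicate k' (B @ [1])) @ B))" using W by simp
    from prefix_pair_append[OF _ this] assms(1) show False by (auto simp: zero_framed_def)
  qed
  have ns: "\<not> suffix [0,0] (W @ B)"
  proof
    assume "suffix [0,0] (W @ B)"
    from suffix_pair_append[OF _ this] assms(1) lastW show False by (auto simp: zero_framed_def)
  qed
  show ?thesis unfolding W_def[symmetric] using Z ne hd lst np ns by (simp add: zero_framed_def)
qed

lemma zero_framed_concat_replicate: assumes "zero_framed Q" "2 \<le> length Q"
  shows "avoids_11_000 (concat (replicate k Q)) \<and> (k \<ge> 1 \<longrightarrow> zero_framed (concat (replicate k Q)))"
proof (induction k)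
  case 0 then show ?case by (simp add: avoids_11_000_def)
next
  case (Suc k)
  show ?case
  proof (cases k)
    case 0 then show ?thesis using assms by (simp add: zero_framed_def)
  next
    case (Suc k')
    define W where "W = concat (replicate k Q)"
    have GW: "zero_framed W" using Suc.IH Suc by (simp add: W_def)
    have lW: "length Q \<le> length W" unfolding W_def Suc by simp
    have Z: "avoids_11_000 (Q @ W)" using assms(1) GW by (intro avoids_11_000_append) (auto simp: zero_framed_def)
    have np: "\<not> prefix [0,0] (Q @ W)"
    proof
      assume "prefix [0,0] (Q @ W)"
      from prefix_pair_append[OF _ this] assms show False by (auto simp: zero_framed_def)
    qed
    have ns: "\<not> suffix [0,0] (Q @ W)"
    proof
      assume "suffix [0,0] (Q @ W)"
      from suffix_pair_append[OF _ this] GW lW assms(2) show False by (auto simp: zero_framed_def)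
    qed
    have "zero_framed (Q @ W)" using Z np ns assms(1) GW by (auto simp: zero_framed_def)
    then show ?thesis unfolding concat_replicate_Suc W_def[symmetric] using zero_framed_def by auto
  qed
qed

lemma zero_framed_rkB: assumes "admissible L g" "1 \<le> n" shows "zero_framed (rkB L g n)"
  using assms(2)
proof (induction n rule: dec_induct)
  case base then show ?case by (simp add: zero_framed_def avoids_11_000_def prefix_def suffix_def)
next
  case (step n)
  have g: "1 \<le> g n" "2 \<le> L n" using assms(1) step by (auto simp: admissible_def)
  have GQ: "zero_framed (block L g n)" unfolding block_def using zero_framed_block_step[OF step.IH g(1)] .
  have "2 \<le> length (block L g n)" using g(1) length_rkB_pos[OF assms(1), of n]
    by (cases "g n") (auto simp: block_def)
  then show ?case using zero_framed_concat_replicate[OF GQ, of "L n"] g rkB_Suc_block[OF step.hyps(1)] by simp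
qed

lemma avoids_11_000_rkB: assumes "admissible L g" shows "avoids_11_000 (rkB L g n)"
  using zero_framed_rkB[OF assms, of "max n 1"] by (cases n) (auto simp: zero_framed_def avoids_11_000_def)

lemma avoids_11_000_sublist:
  "avoids_11_000 z \<Longrightarrow> sublist z' z \<Longrightarrow> avoids_11_000 z'"
  unfolding avoids_11_000_def using set_mono_sublist sublist_order.order_trans by blast

lemma avoids_11_101_sublist:
  "avoids_11_101 z \<Longrightarrow> sublist z' z \<Longrightarrow> avoids_11_101 z'"
  unfolding avoids_11_101_def using set_mono_sublist sublist_order.order_trans by blast

lemma morph_rho_avoids_11:
  assumes "set z \<subseteq> {0, 1}" and "\<not> sublist [1, 1] z" and L2: "2 \<le> L 1"
  shows "\<not> sublist [1, 1] (morph (subst_rho L) z)"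
  using assms(1,2)
proof (induction z)
  case (Cons a z)
  have IH: "\<not> sublist [1, 1] (morph (subst_rho L) z)"
    using Cons sublist_order.order_trans[of "[1, 1]" z "a # z"] by (auto simp: sublist_Cons_right)
  show ?case
  proof
    assume "sublist [1, 1] (morph (subst_rho L) (a # z))"
    then have "sublist [1, 1] (subst_rho L a @ morph (subst_rho L) z)" by simp
    from sublist_pair_append[OF this] IH show False
    proof (elim disjE)
      assume "sublist [1, 1] (subst_rho L a)"
      then show False by (auto simp: subst_rho_def split: if_splits dest: set_mono_sublist)
    next
      assume h: "subst_rho L a \<noteq> [] \<and> morph (subst_rho L) z \<noteq> [] \<and> last (subst_rho L a) = 1
        \<and> hd (morph (subst_rho L) z) = 1"
      then have "a \<noteq> 0" "z \<noteq> []" using L2 by (auto simp: subst_rho_def split: if_splits)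
      moreover have "hd z \<noteq> 0"
      proof
        assume "hd z = 0"
        with \<open>z \<noteq> []\<close> have "hd (morph (subst_rho L) z) = 0" using hd_morph_rho[of z L] L2 by simp
        with h show False by simp
      qed
      ultimately have "sublist [1, 1] (a # z)" using Cons.prems(1)
        by (cases z) (auto simp: sublist_Cons_right)
      then show False using Cons.prems(2) by simp
    qed simp
  qed
qed simp

lemma morph_rho_avoids_101:
  assumes L2: "2 \<le> L 1"
  shows "\<not> sublist [1, 0, 1] (morph (subst_rho L) z)"
proof (induction z)
  case (Cons a z)
  show ?case
  proof
    assume "sublist [1, 0, 1] (morph (subst_rho L) (a # z))"
    then have "sublist [1, 0, 1] (subst_rho L a @ morph (subst_rho L) z)" by simp
    from sublist_triple_append[OF this] Cons.IH show False
    proof (elim disjE)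
      assume "sublist [1, 0, 1] (subst_rho L a)"
      then show False by (auto simp: subst_rho_def split: if_splits dest: set_mono_sublist)
    next
      assume "suffix [1, 0] (subst_rho L a) \<and> morph (subst_rho L) z \<noteq> [] \<and> hd (morph (subst_rho L) z) = 1"
      then have "1 \<in> set (subst_rho L a)" "2 \<le> length (subst_rho L a)"
        using suffix_length_le[of "[1, 0]" "subst_rho L a"] set_mono_sublist[of "[1, 0]" "subst_rho L a"] by auto
      then show False by (cases "a = 0") (auto simp: subst_rho_def)
    next
      assume h: "subst_rho L a \<noteq> [] \<and> last (subst_rho L a) = 1 \<and> prefix [0, 1] (morph (subst_rho L) z)"
      then obtain b z' where "z = b # z'" by (cases z) (auto simp: prefix_def)
      moreover obtain l where "L 1 = Suc (Suc l)" using L2 by (metis add_2_eq_Suc le_Suc_ex)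
      ultimately show False using h by (auto simp: subst_rho_def prefix_def split: if_splits)
    qed simp
  qed
qed simp

lemma avoids_11_101_morph_rho:
  assumes "avoids_11_000 z" "2 \<le> L 1"
  shows "avoids_11_101 (morph (subst_rho L) z)"
proof -
  have "set (morph (subst_rho L) z) \<subseteq> {0, 1}"
    using assms(1) by (auto simp: avoids_11_000_def morph_def subst_rho_def)
  then show ?thesis
    using assms morph_rho_avoids_11 morph_rho_avoids_101 by (auto simp: avoids_11_000_def avoids_11_101_def)
qed

lemma trailing_zeros_before_0_le_1:
  assumes "avoids_11_000 z" "z = za @ 0 # zb"
  shows "trailing_zeros za \<le> 1"
proof (rule ccontr)
  assume "\<not> trailing_zeros za \<le> 1"
  then have "3 \<le> trailing_zeros (za @ [0])" by simp
  then have "suffix (replicate 3 0) (replicate (trailing_zeros (za @ [0])) 0)" by (rule suffix_replicate_mono)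
  then have "suffix (replicate 3 0) (za @ [0])"
    using suffix_replicate_trailing_zeros[of "za @ [0]"] suffix_order.order_trans by blast
  then have "suffix [0,0,0] (za @ [0])" by (simp add: numeral_3_eq_3)
  then have "sublist [0,0,0] (za @ [0])" by (rule suffix_imp_sublist)
  moreover have "sublist (za @ [0]) z" using sublist_middle[of z "[]" "za @ [0]" zb] assms(2) by simp
  ultimately have "sublist [0,0,0] z" using sublist_order.order_trans by blast
  then show False using assms(1) by (simp add: avoids_11_000_def)
qed

lemma trailing_zeros_prefix_le_2:
  assumes "avoids_11_000 z" "z = za @ zb"
  shows "trailing_zeros za \<le> 2"
proof (rule ccontr)
  assume "\<not> trailing_zeros za \<le> 2"
  then have "3 \<le> trailing_zeros za" by simp
  then have "suffix (replicate 3 0) (replicate (trailing_zeros za) 0)" by (rule suffix_replicate_mono)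
  then have "suffix (replicate 3 0) za"
    using suffix_replicate_trailing_zeros[of za] suffix_order.order_trans by blast
  then have "sublist [0,0,0] za" by (simp add: numeral_3_eq_3 suffix_imp_sublist)
  moreover have "sublist za z" using assms(2) by simp
  ultimately have "sublist [0,0,0] z" using sublist_order.order_trans by blast
  then show False using assms(1) by (simp add: avoids_11_000_def)
qed

section \<open>Language and right special words\<close>

definition in_lang :: "(nat \<Rightarrow> nat) \<Rightarrow> (nat \<Rightarrow> nat) \<Rightarrow> nat list \<Rightarrow> bool" where
  "in_lang L g w \<longleftrightarrow> (\<exists>N. sublist w (rkB L g N))"

definition right_special :: "(nat \<Rightarrow> nat) \<Rightarrow> (nat \<Rightarrow> nat) \<Rightarrow> nat list \<Rightarrow> bool" where
  "right_special L g w \<longleftrightarrow> in_lang L g (w @ [0]) \<and> in_lang L g (w @ [1])"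

lemma in_lang_sublist: "in_lang L g w \<Longrightarrow> sublist v w \<Longrightarrow> in_lang L g v"
  unfolding in_lang_def using sublist_order.order_trans by blast

lemma in_lang_rkB: "sublist w (rkB L g N) \<Longrightarrow> in_lang L g w"
  unfolding in_lang_def by blast

lemma sublist_rkB_mono:
  assumes "admissible L g" "sublist w (rkB L g N)" "N \<le> M"
  shows "sublist w (rkB L g M)"
  using assms prefix_rkB_mono[OF assms(1) assms(3)] prefix_imp_sublist sublist_order.order_trans by blast

lemma set_in_lang: "in_lang L g w \<Longrightarrow> set w \<subseteq> {0,1}"
  unfolding in_lang_def using set_rkB set_mono_sublist by blast

lemma in_lang_avoids_11_000:
  "admissible L g \<Longrightarrow> in_lang L g w \<Longrightarrow> avoids_11_000 w"
  unfolding in_lang_def using avoids_11_000_rkB avoids_11_000_sublist by blast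

lemma in_lang_occurs_deep: assumes "admissible L g" "in_lang L g v"
  shows "\<exists>N \<alpha> \<beta>. 2 \<le> N \<and> rkB L g N = \<alpha> @ v @ \<beta> \<and> K \<le> length \<alpha>"
proof -
  from assms obtain N0 where "sublist v (rkB L g N0)" by (auto simp: in_lang_def)
  define N where "N = max N0 (K + 1)"
  have "sublist v (rkB L g N)" using sublist_rkB_mono[OF assms(1) \<open>sublist v _\<close>] by (simp add: N_def)
  then obtain a b where ab: "rkB L g N = a @ v @ b" by (auto simp: sublist_def)
  have "1 \<le> N" by (simp add: N_def)
  obtain r where r: "rkB L g (Suc N) = rkB L g N @ [1] @ rkB L g N @ r"
    using rkB_Suc_starts[OF assms(1) \<open>1 \<le> N\<close>] by blast
  have "K \<le> length (rkB L g N)" using length_rkB_ge[OF assms(1), of N] by (simp add: N_def)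
  moreover have "rkB L g (Suc N) = (rkB L g N @ [1] @ a) @ v @ (b @ r)"
    using r ab by simp
  moreover have "2 \<le> Suc N" by (simp add: N_def)
  ultimately show ?thesis
    by (intro exI[of _ "Suc N"] exI[of _ "rkB L g N @ [1] @ a"] exI[of _ "b @ r"]) auto
qed

lemma right_special_suffix:
  "right_special L g v \<Longrightarrow> suffix u v \<Longrightarrow> right_special L g u"
  unfolding right_special_def suffix_def using in_lang_sublist by (metis append.assoc sublist_append_leftI)

lemma last_right_special:
  assumes adm: "admissible L g" and rs: "right_special L g v" and v: "v \<noteq> []"
  shows "last v = 0"
proof -
  have "v @ [1] = butlast v @ [last v, 1] @ []" using v by simp
  then have "sublist [last v, 1] (v @ [1])" by (rule sublist_middle)
  then have "avoids_11_000 [last v, 1]"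
    using rs in_lang_sublist in_lang_avoids_11_000[OF adm] unfolding right_special_def by blast
  then show ?thesis by (auto simp: avoids_11_000_def)
qed

section \<open>Recognizability\<close>

definition tail_block1 :: "(nat \<Rightarrow> nat) \<Rightarrow> nat list" where
  "tail_block1 g = concat (replicate (g 1) [1,0])"

definition tail_block1_1_block1 :: "(nat \<Rightarrow> nat) \<Rightarrow> nat list" where
  "tail_block1_1_block1 g = tail_block1 g @ [1,0] @ tail_block1 g"

definition butlast_block1 :: "(nat \<Rightarrow> nat) \<Rightarrow> nat list" where
  "butlast_block1 g = concat (replicate (g 1) [0,1])"

lemma block1_Cons_tail: "block1 g = 0 # tail_block1 g"
  by (simp add: block1_zigzag zigzag_Cons tail_block1_def)

lemma block1_snoc: "block1 g = butlast_block1 g @ [0]" by (simp add: block1_def butlast_block1_def)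

lemma length_tail_block1[simp]: "length (tail_block1 g) = 2 * g 1"
  by (simp add: tail_block1_def length_concat sum_list_replicate)

lemma length_block1: "length (block1 g) = 2 * g 1 + 1" by (simp add: block1_Cons_tail)

lemma length_rkB_2: "length (rkB L g 2) = L 1 * (2 * g 1 + 1)"
  by (simp add: rkB_2 length_concat_replicate length_block1)

lemma length_morph_tau_ge: assumes "admissible L g"
  shows "length xs + (if 0 \<in> set xs then 1 else 0) \<le> length (morph (subst_tau L g) xs)"
proof (induction xs)
  case Nil then show ?case by simp
next
  case (Cons a xs)
  have "2 * 1 \<le> length (rkB L g 2)"
    unfolding length_rkB_2 using assms by (intro mult_le_mono) (auto simp: admissible_def)
  then show ?case using Cons by (cases "a = 0") (auto simp: subst_tau_def split: if_splits)
qed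

lemma length_morph_pi_le: "length (morph (subst_pi g) ys) \<le> length ys * length (block1 g)"
  by (induction ys) (auto simp: subst_pi_def length_block1)

lemma take_concat_replicate_10:
  "i \<le> n \<Longrightarrow> take (2*i) (concat (replicate n [1,0::nat])) = concat (replicate i [1,0])"
proof (induction i arbitrary: n)
  case 0 then show ?case by simp
next
  case (Suc i)
  then obtain n' where "n = Suc n'" by (cases n) auto
  with Suc show ?case by simp
qed

lemma tail_block1_1_block1_replicate:
  "tail_block1_1_block1 g = concat (replicate (2 * g 1 + 1) [1,0])"
proof -
  have e: "2 * g 1 + 1 = g 1 + (1 + g 1)" by simp
  have "concat (replicate (2 * g 1 + 1) [1,0::nat]) = concat (replicate (g 1) [1,0]) @ [1,0] @ concat (replicate (g 1) [1,0])"
    unfolding e replicate_add concat_append by simp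
  then show ?thesis by (simp add: tail_block1_1_block1_def tail_block1_def)
qed

lemma length_tail_block1_1_block1[simp]: "length (tail_block1_1_block1 g) = 4 * g 1 + 2"
  by (simp add: tail_block1_1_block1_def)

lemma take_even_tail_block1_1_block1:
  assumes "j = 2 * b" "b \<le> 2 * g 1 + 1"
  shows "0 # take j (tail_block1_1_block1 g) = zigzag b"
  unfolding tail_block1_1_block1_replicate assms(1) take_concat_replicate_10[OF assms(2)] zigzag_Cons ..

lemma take_tail_block1_1_block1_avoids_00:
  "\<not> sublist [0,0] (0 # take j (tail_block1_1_block1 g))"
proof
  assume "sublist [0,0] (0 # take j (tail_block1_1_block1 g))"
  moreover have "prefix (0 # take j (tail_block1_1_block1 g)) (zigzag (2 * g 1 + 1))"
    unfolding zigzag_Cons tail_block1_1_block1_replicate by (simp add: take_is_prefix del: replicate.simps)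
  ultimately have "sublist [0,0] (zigzag (2 * g 1 + 1))"
    using prefix_imp_sublist sublist_order.order_trans by blast
  then show False using zigzag_avoids_00 by blast
qed

lemma nth_tail_block1: "i < 2 * g 1 \<Longrightarrow> tail_block1 g ! i = (if even i then 1 else 0)"
proof -
  have "\<And>n. i < 2 * n \<Longrightarrow> concat (replicate n [1,0::nat]) ! i = (if even i then 1 else 0)"
  proof (induction i arbitrary: rule: less_induct)
    case (less i)
    fix n assume "i < 2 * n"
    then obtain n' where n: "n = Suc n'" by (cases n) auto
    show "concat (replicate n [1,0::nat]) ! i = (if even i then 1 else 0)"
    proof (cases "i < 2")
      case True then show ?thesis using n by (cases i) (auto simp: nth_append)
    next
      case False
      then have "concat (replicate n [1,0::nat]) ! i = concat (replicate n' [1,0]) ! (i - 2)"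
        using n by (simp add: nth_append numeral_2_eq_2)
      also have "\<dots> = (if even (i - 2) then 1 else 0)" using less.IH[of "i - 2" n'] False \<open>i < 2 * n\<close> n by simp
      finally show ?thesis using False by simp
    qed
  qed
  then show "i < 2 * g 1 \<Longrightarrow> tail_block1 g ! i = (if even i then 1 else 0)" by (simp add: tail_block1_def)
qed

lemma nth_block1:
  "1 \<le> k \<Longrightarrow> k < length (block1 g) \<Longrightarrow> block1 g ! k = (if even (k - 1) then 1 else 0)"
  using nth_tail_block1[of "k - 1" g] by (cases k) (auto simp: block1_Cons_tail length_block1)

lemma take_block1:
  "1 \<le> k \<Longrightarrow> take k (block1 g) = 0 # take (k - 1) (tail_block1 g)"
  by (cases k) (auto simp: block1_Cons_tail)

lemma take_tail_block1_1_block1_short: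
  "i \<le> 2 * g 1 \<Longrightarrow> take i (tail_block1_1_block1 g) = take i (tail_block1 g)"
  by (simp add: tail_block1_1_block1_def)

lemma take_tail_block1_1_block1_long:
  "1 \<le> k \<Longrightarrow> k \<le> 2 * g 1 + 1 \<Longrightarrow> take (2 * g 1 + 1 + k) (tail_block1_1_block1 g) = tail_block1 g @ [1,0] @ take (k-1) (tail_block1 g)"
proof -
  assume "1 \<le> k" "k \<le> 2 * g 1 + 1"
  then have e: "2 * g 1 + 1 + k = length (tail_block1 g) + 2 + (k - 1)" by simp
  show ?thesis unfolding e tail_block1_1_block1_def by (simp add: take_append)
qed

lemma suffix_00_block1_block1:
  "suffix (0 # 0 # take (2 * g 1) (tail_block1_1_block1 g)) (block1 g @ block1 g)"
  by (subst (2) block1_Cons_tail) (simp add: block1_snoc tail_block1_1_block1_def suffix_appendI)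

lemma suffix_00_block1_block1_1:
  "suffix (0 # 0 # take (2 * g 1 + 1) (tail_block1_1_block1 g)) (block1 g @ block1 g @ [1])"
  by (subst (2) block1_Cons_tail) (simp add: block1_snoc tail_block1_1_block1_def suffix_appendI)

lemma suffix_00_block1_1_block1:
  "suffix (0 # 0 # take (4 * g 1 + 2) (tail_block1_1_block1 g)) (block1 g @ block1 g @ [1] @ block1 g)"
  by (subst (2 3) block1_Cons_tail) (simp add: block1_snoc tail_block1_1_block1_def suffix_appendI)

lemma suffix_00_block1_take_block1:
  assumes "1 \<le> k" "k \<le> 2 * g 1"
  shows "suffix (0 # 0 # take (k - 1) (tail_block1_1_block1 g)) (block1 g @ take k (block1 g))"
proof -
  have "take (k - 1) (tail_block1_1_block1 g) = take (k - 1) (tail_block1 g)"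
    using assms by (intro take_tail_block1_1_block1_short) simp
  then show ?thesis unfolding take_block1[OF assms(1)] by (simp add: block1_snoc suffix_appendI)
qed

lemma suffix_00_block1_1_take_block1:
  assumes "1 \<le> k" "k \<le> 2 * g 1"
  shows "suffix (0 # 0 # take (2 * g 1 + 1 + k) (tail_block1_1_block1 g))
    (block1 g @ block1 g @ [1] @ take k (block1 g))"
proof -
  have "take (2 * g 1 + 1 + k) (tail_block1_1_block1 g) = tail_block1 g @ [1, 0] @ take (k - 1) (tail_block1 g)"
    using assms by (intro take_tail_block1_1_block1_long) simp_all
  then show ?thesis
    unfolding take_block1[OF assms(1)] by (subst (2) block1_Cons_tail) (simp add: block1_snoc suffix_appendI)
qed

lemma morph_pi_boundary_context:
  assumes Y: "avoids_11_101 [a1, a2, a3, a4, t]"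
  obtains j where "suffix (0 # 0 # take j (tail_block1_1_block1 g)) (morph (subst_pi g) [a1, a2, a3, a4])"
    and "t = 1 \<Longrightarrow> j = 2 * g 1" and "j = 2 * g 1 \<or> j = 2 * g 1 + 1 \<or> j = 4 * g 1 + 2"
proof -
  have bin: "{a1, a2, a3, a4, t} \<subseteq> {0, 1}" using Y by (simp add: avoids_11_101_def)
  consider "a3 = 0" "a4 = 0" | "a1 = 0" "a2 = 0" "a3 = 1" "a4 = 0" "t = 0" | "a2 = 0" "a3 = 0" "a4 = 1" "t = 0"
    using Y bin by (auto simp: avoids_11_101_def sublist_Cons_right)
  then show ?thesis
  proof cases
    case 1
    then show ?thesis
      using that[of "2 * g 1"] suffix_00_block1_block1[of g] by (simp add: suffix_appendI)
  next
    case 2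
    then show ?thesis
      using that[of "4 * g 1 + 2"] suffix_00_block1_1_block1[of g] by (simp add: suffix_appendI)
  next
    case 3
    then show ?thesis
      using that[of "2 * g 1 + 1"] suffix_00_block1_block1_1[of g] by (simp add: suffix_appendI)
  qed
qed

lemma morph_pi_inner_context:
  assumes Y: "avoids_11_101 [a2, a3, a4, 0]" and k: "1 \<le> k" "k \<le> 2 * g 1"
  obtains j where "suffix (0 # 0 # take j (tail_block1_1_block1 g))
      (morph (subst_pi g) [a2, a3, a4] @ take k (block1 g))"
    and "j = k - 1 \<or> j = 2 * g 1 + 1 + k"
proof -
  have bin: "{a2, a3, a4} \<subseteq> {0, 1}" using Y by (simp add: avoids_11_101_def)
  consider "a4 = 0" | "a2 = 0" "a3 = 0" "a4 = 1"
    using Y bin by (auto simp: avoids_11_101_def sublist_Cons_right)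
  then show ?thesis
  proof cases
    case 1
    then show ?thesis
      using that[of "k - 1"] suffix_00_block1_take_block1[of k g, OF k] by (simp add: suffix_appendI)
  next
    case 2
    then show ?thesis
      using that[of "2 * g 1 + 1 + k"] suffix_00_block1_1_take_block1[of k g, OF k] by (simp add: suffix_appendI)
  qed
qed

lemma morph_pi_split_deep:
  assumes e: "morph (subst_pi g) y = \<alpha> @ c # \<beta>" and m: "4 * length (block1 g) \<le> length \<alpha>"
  obtains ys a1 a2 a3 a4 t yb k where "y = ys @ [a1, a2, a3, a4, t] @ yb"
    and "\<alpha> = morph (subst_pi g) (ys @ [a1, a2, a3, a4]) @ take k (subst_pi g t)"
    and "k < length (subst_pi g t)" and "c = subst_pi g t ! k"
proof -
  obtain ya t yb k where dec: "y = ya @ t # yb" "\<alpha> = morph (subst_pi g) ya @ take k (subst_pi g t)"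
    "k < length (subst_pi g t)" "c = subst_pi g t ! k"
    using morph_eq_append_Cons[OF e] by blast
  have "k < length (block1 g)" using dec(3) by (cases "t = 0") (auto simp: length_block1)
  moreover have "length \<alpha> \<le> length ya * length (block1 g) + k"
    using dec(2) length_morph_pi_le[of g ya] by simp
  ultimately have "4 * length (block1 g) < length ya * length (block1 g) + length (block1 g)"
    using m by linarith
  then have "4 < length ya + 1" by (metis add_mult_distrib mult_1 mult_less_cancel2)
  then have "4 \<le> length ya" by simp
  then obtain ys a1 a2 a3 a4 where "ya = ys @ [a1, a2, a3, a4]" using last_four by blast
  then show ?thesis using that dec by simp
qed

text \<open>
  The last \<open>00\<close> of a \<open>\<pi>\<close>-image sits at the junction of two images of \<open>0\<close>, and after it the
  image continues as a prefix of \<open>(10)^(2 \<gamma> 1 + 1)\<close>; the length \<open>j\<close> of that prefix locates the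
  cut in the preimage. The bound on \<open>\<alpha>\<close> guarantees four preimage letters before the cut.
\<close>

lemma morph_pi_left_context:
  assumes Y: "avoids_11_101 y" and e: "morph (subst_pi g) y = \<alpha> @ c # \<beta>"
    and m: "4 * length (block1 g) \<le> length \<alpha>"
  shows "\<exists>j. j \<le> 4 * g 1 + 2 \<and> suffix (0 # 0 # take j (tail_block1_1_block1 g)) \<alpha> \<and>
   (c = 1 \<longrightarrow> even j \<and> j \<le> 4 * g 1 \<and> (j = 2 * g 1 \<longrightarrow> (\<exists>ya yb. y = ya @ 1 # yb \<and> \<alpha> = morph (subst_pi g) ya))) \<and>
   (c \<noteq> 1 \<longrightarrow> (even j \<longrightarrow> j = 2 * g 1 \<or> j = 4 * g 1 + 2) \<and>
       (j = 2 * g 1 \<longrightarrow> (\<exists>ya yb. y = ya @ 0 # yb \<and> \<alpha> = morph (subst_pi g) ya)))"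
proof -
  obtain ys a1 a2 a3 a4 t yb k where y: "y = ys @ [a1, a2, a3, a4, t] @ yb"
    and \<alpha>: "\<alpha> = morph (subst_pi g) (ys @ [a1, a2, a3, a4]) @ take k (subst_pi g t)"
    and k: "k < length (subst_pi g t)" and c: "c = subst_pi g t ! k"
    using morph_pi_split_deep[OF e m] by blast
  have Y5: "avoids_11_101 [a1, a2, a3, a4, t]" using avoids_11_101_sublist[OF Y sublist_middle[OF y]] .
  then have t: "t = 0 \<or> t = 1" by (simp add: avoids_11_101_def)
  show ?thesis
  proof (cases "t = 1 \<or> k = 0")
    case True
    then have k0: "k = 0" using k by auto
    have \<alpha>0: "\<alpha> = morph (subst_pi g) (ys @ [a1, a2, a3, a4])" using \<alpha> k0 by simp
    have "c = t" using c k0 t by (auto simp: block1_Cons_tail)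
    moreover obtain j where j: "suffix (0 # 0 # take j (tail_block1_1_block1 g)) (morph (subst_pi g) [a1, a2, a3, a4])"
      "t = 1 \<Longrightarrow> j = 2 * g 1" "j = 2 * g 1 \<or> j = 2 * g 1 + 1 \<or> j = 4 * g 1 + 2"
      using morph_pi_boundary_context[OF Y5] by blast
    moreover have "suffix (0 # 0 # take j (tail_block1_1_block1 g)) \<alpha>"
      using j(1) \<alpha>0 by (simp add: suffix_appendI)
    moreover have "\<exists>ya yb'. y = ya @ t # yb' \<and> \<alpha> = morph (subst_pi g) ya"
      using y \<alpha>0 by (intro exI[of _ "ys @ [a1, a2, a3, a4]"] exI[of _ yb]) simp
    ultimately show ?thesis using t by (intro exI[of _ j]) auto
  next
    case False
    then have t0: "t = 0" and k1: "1 \<le> k" using t by auto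
    have k2: "k \<le> 2 * g 1" using k t0 by (simp add: length_block1)
    have "c = (if even (k - 1) then 1 else 0)" using c t0 nth_block1[OF k1] k by simp
    moreover have "avoids_11_101 [a2, a3, a4, 0]"
      using avoids_11_101_sublist[OF Y5, of "[a2, a3, a4, 0]"] t0 by (simp add: sublist_Cons_right)
    then obtain j where "suffix (0 # 0 # take j (tail_block1_1_block1 g))
        (morph (subst_pi g) [a2, a3, a4] @ take k (block1 g))" and "j = k - 1 \<or> j = 2 * g 1 + 1 + k"
      using morph_pi_inner_context[of a2 a3 a4 k g] k1 k2 by blast
    ultimately show ?thesis using \<alpha> t0 k1 k2
      by (intro exI[of _ j]) (auto simp: suffix_appendI; presburger)
  qed
qed

lemma suffix_marker_00:
  assumes ok: "\<not> sublist [0,0] (0 # A)" and s: "suffix (0 # 0 # A) xs" and w: "suffix w xs"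
  shows "(sublist [0,0] w \<longrightarrow> suffix (0 # 0 # A) w) \<and> (\<not> sublist [0,0] w \<longrightarrow> suffix w (0 # A))"
proof -
  from suffix_same_cases[OF s w] have "suffix (0 # 0 # A) w \<or> suffix w (0 # 0 # A)" by blast
  then show ?thesis
  proof
    assume "suffix (0 # 0 # A) w"
    moreover have "sublist [0,0] (0 # 0 # A)" by (simp add: sublist_Cons_right prefix_def)
    ultimately have "sublist [0,0] w" using suffix_imp_sublist sublist_order.order_trans by blast
    then show ?thesis using \<open>suffix (0 # 0 # A) w\<close> by blast
  next
    assume h: "suffix w (0 # 0 # A)"
    then have "w = 0 # 0 # A \<or> suffix w (0 # A)"
      by (auto simp: suffix_def Cons_eq_append_conv)
    then show ?thesis
    proof
      assume "w = 0 # 0 # A" then show ?thesis by auto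
    next
      assume "suffix w (0 # A)"
      then have "\<not> sublist [0,0] w" using ok suffix_imp_sublist sublist_order.order_trans by blast
      then show ?thesis using \<open>suffix w (0 # A)\<close> by blast
    qed
  qed
qed

lemma suffix_marker_00_unique:
  fixes A B w :: "nat list"
  assumes "\<not> sublist [0,0] (0 # A)" "\<not> sublist [0,0] (0 # B)"
    "suffix (0 # 0 # A) w" "suffix (0 # 0 # B) w"
  shows "A = B"
proof -
  have *: "A = B" if okB: "\<not> sublist [0,0] (0 # B)" and s: "suffix (0 # 0 # A) (0 # 0 # B)" for A B :: "nat list"
  proof -
    have "0 # 0 # A = 0 # 0 # B \<or> suffix (0 # 0 # A) (0 # B)"
      using s by (auto simp: suffix_def Cons_eq_append_conv)
    then show ?thesis
    proof
      assume "suffix (0 # 0 # A) (0 # B)"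
      moreover have "sublist [0,0] (0 # 0 # A)" by (simp add: sublist_Cons_right prefix_def)
      ultimately have "sublist [0,0] (0 # B)"
        using suffix_imp_sublist sublist_order.order_trans by blast
      with okB show ?thesis by blast
    qed simp
  qed
  from suffix_same_cases[OF assms(3,4)] show ?thesis
    using *[OF assms(2)] *[OF assms(1)] by auto
qed

lemma right_special_desubst_pi:
  assumes Y0: "avoids_11_101 y0" and Y1: "avoids_11_101 y1"
    and e0: "morph (subst_pi g) y0 = \<alpha>0 @ w @ 0 # \<beta>0" and e1: "morph (subst_pi g) y1 = \<alpha>1 @ w @ 1 # \<beta>1"
    and m0: "4 * length (block1 g) \<le> length \<alpha>0" and m1: "4 * length (block1 g) \<le> length \<alpha>1"
    and g1: "1 \<le> g 1"
  shows "suffix w (zigzag (2 * g 1))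
    \<or> (\<exists>u. sublist (u @ [0]) y0 \<and> sublist (u @ [1]) y1 \<and> suffix w (morph (subst_pi g) u))"
proof -
  let ?R = "tail_block1_1_block1 g"
  obtain j0 where j0: "j0 \<le> 4 * g 1 + 2" "suffix (0 # 0 # take j0 ?R) (\<alpha>0 @ w)"
      "even j0 \<longrightarrow> j0 = 2 * g 1 \<or> j0 = 4 * g 1 + 2"
      "j0 = 2 * g 1 \<longrightarrow> (\<exists>ya yb. y0 = ya @ 0 # yb \<and> \<alpha>0 @ w = morph (subst_pi g) ya)"
    using morph_pi_left_context[OF Y0, of g "\<alpha>0 @ w" 0 \<beta>0] e0 m0 by simp blast
  obtain j1 where j1: "even j1" "j1 \<le> 4 * g 1" "suffix (0 # 0 # take j1 ?R) (\<alpha>1 @ w)"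
      "j1 = 2 * g 1 \<longrightarrow> (\<exists>ya yb. y1 = ya @ 1 # yb \<and> \<alpha>1 @ w = morph (subst_pi g) ya)"
    using morph_pi_left_context[OF Y1, of g "\<alpha>1 @ w" 1 \<beta>1] e1 m1 by simp blast
  have marker: "(sublist [0, 0] w \<longrightarrow> suffix (0 # 0 # take j ?R) w)
      \<and> (\<not> sublist [0, 0] w \<longrightarrow> suffix w (0 # take j ?R))"
    if "suffix (0 # 0 # take j ?R) (\<alpha> @ w)" for j \<alpha>
    by (rule suffix_marker_00[OF take_tail_block1_1_block1_avoids_00 that]) (rule suffixI[OF refl])
  show ?thesis
  proof (cases "sublist [0, 0] w")
    case False
    obtain b where b: "j1 = 2 * b" using j1(1) by (auto elim: evenE)
    then have "suffix w (zigzag b)"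
      using marker[OF j1(3)] False take_even_tail_block1_1_block1[OF b, of g] j1(2) by auto
    moreover have "suffix (zigzag b) (zigzag (2 * g 1))" using b j1(2) by (intro suffix_zigzag_mono) simp
    ultimately show ?thesis using suffix_order.order_trans by blast
  next
    case True
    then have "take j0 ?R = take j1 ?R"
      using marker[OF j0(2)] marker[OF j1(3)]
        suffix_marker_00_unique[OF take_tail_block1_1_block1_avoids_00 take_tail_block1_1_block1_avoids_00]
      by blast
    moreover have "length (take j0 ?R) = j0" "length (take j1 ?R) = j1" using j0(1) j1(2) by simp_all
    ultimately have "j0 = j1" by metis
    then have "j0 = 2 * g 1" using j0(3) j1(1,2) g1 by auto
    then obtain ya0 yb0 ya1 yb1 where c: "y0 = ya0 @ 0 # yb0" "\<alpha>0 @ w = morph (subst_pi g) ya0"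
        "y1 = ya1 @ 1 # yb1" "\<alpha>1 @ w = morph (subst_pi g) ya1"
      using j0(4) j1(4) \<open>j0 = j1\<close> by blast
    then have "suffix w (morph (subst_pi g) ya0)" "suffix w (morph (subst_pi g) ya1)"
      by (metis suffixI)+
    from common_suffix_morph_extension[OF subst_pi_last_inj c(1,3) _ _ this] Y0 Y1 show ?thesis
      by (auto simp: avoids_11_101_def)
  qed
qed

lemma morph_rho_eq_append_1:
  assumes "morph (subst_rho L) z = xs @ 1 # ys" and "set z \<subseteq> {0, 1}"
  obtains za zb where "z = za @ 1 # zb" and "xs = morph (subst_rho L) za"
proof -
  obtain za t zb k where d: "z = za @ t # zb" "xs = morph (subst_rho L) za @ take k (subst_rho L t)"
    "k < length (subst_rho L t)" "1 = subst_rho L t ! k"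
    using morph_eq_append_Cons[OF assms(1)] by blast
  have "t = 1" using d(1,3,4) assms(2) by (cases "t = 0") (auto simp: subst_rho_def)
  then show ?thesis using that d by (simp add: subst_rho_def)
qed

lemma morph_rho_eq_append_0:
  assumes "morph (subst_rho L) z = xs @ 0 # ys"
  obtains za zb k where "z = za @ 0 # zb" and "k < L 1" and "xs = morph (subst_rho L) za @ replicate k 0"
proof -
  obtain za t zb k where d: "z = za @ t # zb" "xs = morph (subst_rho L) za @ take k (subst_rho L t)"
    "k < length (subst_rho L t)" "0 = subst_rho L t ! k"
    using morph_eq_append_Cons[OF assms] by blast
  have "t = 0" using d(3,4) by (cases "t = 0") (auto simp: subst_rho_def)
  then show ?thesis using that d by (simp add: subst_rho_def)
qed

lemma trailing_zeros_before_1: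
  assumes "avoids_11_101 (xs @ u @ 1 # ys)" and "u \<noteq> []"
  shows "trailing_zeros u \<noteq> 0"
proof
  assume "trailing_zeros u = 0"
  then have "last u \<noteq> 0" by (rule last_nonzero_trailing_zeros_0[OF _ assms(2)])
  moreover have "last u \<in> {0, 1}"
    using assms(1) last_in_set[OF assms(2)] unfolding avoids_11_101_def by auto
  moreover have "xs @ u @ 1 # ys = (xs @ butlast u) @ [last u, 1] @ ys"
    using assms(2) by (metis append.assoc append_Cons append_Nil append_butlast_last_id)
  ultimately have "sublist [1, 1] (xs @ u @ 1 # ys)" by (metis insertE singletonD sublist_middle)
  then show False using assms(1) by (simp add: avoids_11_101_def)
qed

text \<open>
  \<open>\<rho>\<close> multiplies runs of zeros by \<open>L 1 \<ge> 2\<close> while runs of zeros in the preimage have length at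
  most 2, so counting trailing zeros shows that \<open>u\<close> is cut at the same place in both preimages.
\<close>

lemma right_special_desubst_rho:
  assumes Z0: "avoids_11_000 z0" and Z1: "avoids_11_000 z1"
    and e0: "morph (subst_rho L) z0 = \<alpha>0 @ u @ 0 # \<beta>0" and e1: "morph (subst_rho L) z1 = \<alpha>1 @ u @ 1 # \<beta>1"
    and L2: "2 \<le> L 1"
  shows "(\<exists>j. u = replicate j 0 \<and> j + 1 \<le> 2 * L 1) \<or>
         (\<exists>v. sublist (v @ [0]) z0 \<and> sublist (v @ [1]) z1 \<and> suffix u (morph (subst_rho L) v))"
proof -
  have bin: "set z0 \<subseteq> {0, 1}" "set z1 \<subseteq> {0, 1}" using Z0 Z1 by (simp_all add: avoids_11_000_def)
  obtain za1 zb1 where z1: "z1 = za1 @ 1 # zb1" and c1: "\<alpha>1 @ u = morph (subst_rho L) za1"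
    using morph_rho_eq_append_1[of L z1 "\<alpha>1 @ u" \<beta>1] e1 bin(2) by auto
  obtain za0 zb0 k where z0: "z0 = za0 @ 0 # zb0" and k: "k < L 1"
    and c0: "\<alpha>0 @ u = morph (subst_rho L) za0 @ replicate k 0"
    using morph_rho_eq_append_0[of L z0 "\<alpha>0 @ u" \<beta>0] e0 by auto
  have t0: "trailing_zeros za0 \<le> 1" using trailing_zeros_before_0_le_1[OF Z0 z0] .
  have tz0: "trailing_zeros (\<alpha>0 @ u) = L 1 * trailing_zeros za0 + k"
    using c0 by (simp add: trailing_zeros_append_replicate trailing_zeros_morph_rho)
  have tz1: "trailing_zeros (\<alpha>1 @ u) = L 1 * trailing_zeros za1"
    using c1 by (simp add: trailing_zeros_morph_rho)
  show ?thesis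
  proof (cases "\<exists>x\<in>set u. x \<noteq> 0")
    case False
    then have u: "u = replicate (length u) 0" by (simp add: replicate_length_same)
    then have "length u \<le> L 1 * trailing_zeros za0 + k"
      using tz0 trailing_zeros_append_replicate[of \<alpha>0 "length u"] by simp
    also have "\<dots> \<le> L 1 * 1 + k" using t0 by (intro add_mono mult_le_mono2) auto
    finally show ?thesis using u k by auto
  next
    case True
    then obtain x where x: "x \<in> set u" "x \<noteq> 0" by blast
    have "u \<noteq> []" using x by auto
    then have "trailing_zeros u \<noteq> 0"
      using trailing_zeros_before_1[of \<alpha>1 u \<beta>1] avoids_11_101_morph_rho[of z1 L, OF Z1 L2] e1 by simp
    moreover have "trailing_zeros za1 \<le> 2" using trailing_zeros_prefix_le_2[OF Z1 z1] .
    moreover have "L 1 * trailing_zeros za0 + k = trailing_zeros u" "L 1 * trailing_zeros za1 = trailing_zeros u"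
      using tz0 tz1 trailing_zeros_append_nonzero[OF x] by simp_all
    ultimately have "k = 0" using t0 k
      by (cases "trailing_zeros za0"; cases "trailing_zeros za1") (auto simp: numeral_2_eq_2 le_Suc_eq)
    then have "suffix u (morph (subst_rho L) za0)" "suffix u (morph (subst_rho L) za1)"
      using c0 c1 by (metis suffixI append_Nil2 replicate_0)+
    from common_suffix_morph_extension[OF subst_rho_last_inj z0 z1 bin this] L2 show ?thesis by auto
  qed
qed

lemma right_special_desubst:
  assumes adm: "admissible L g" and rs: "right_special L g w"
  shows "suffix w (zigzag (2 * g 1))
    \<or> (\<exists>j. j + 1 \<le> 2 * L 1 \<and> suffix w (concat (replicate j (block1 g))))
    \<or> (\<exists>v. right_special (shift_seq L) (shift_seq g) v \<and> suffix w (morph (subst_tau L g) v))"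
proof -
  have L2: "2 \<le> L 1" and g1: "1 \<le> g 1" using adm by (auto simp: admissible_def)
  obtain N0 \<alpha>0 \<beta>0 where o0: "2 \<le> N0" "rkB L g N0 = \<alpha>0 @ (w @ [0]) @ \<beta>0"
      "4 * length (block1 g) \<le> length \<alpha>0"
    using in_lang_occurs_deep[OF adm] rs unfolding right_special_def by blast
  obtain N1 \<alpha>1 \<beta>1 where o1: "2 \<le> N1" "rkB L g N1 = \<alpha>1 @ (w @ [1]) @ \<beta>1"
      "4 * length (block1 g) \<le> length \<alpha>1"
    using in_lang_occurs_deep[OF adm] rs unfolding right_special_def by blast
  define z0 where "z0 = rkB (shift_seq L) (shift_seq g) (N0 - 1)"
  define z1 where "z1 = rkB (shift_seq L) (shift_seq g) (N1 - 1)"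
  have Z0: "avoids_11_000 z0" and Z1: "avoids_11_000 z1"
    using avoids_11_000_rkB[OF admissible_shift_seq[OF adm]] by (simp_all add: z0_def z1_def)
  have e0: "morph (subst_pi g) (morph (subst_rho L) z0) = \<alpha>0 @ w @ 0 # \<beta>0"
    using rkB_Suc_morph_tau[of "N0 - 1" L g] o0(1,2) by (simp add: z0_def morph_pi_morph_rho)
  have e1: "morph (subst_pi g) (morph (subst_rho L) z1) = \<alpha>1 @ w @ 1 # \<beta>1"
    using rkB_Suc_morph_tau[of "N1 - 1" L g] o1(1,2) by (simp add: z1_def morph_pi_morph_rho)
  from right_special_desubst_pi[OF avoids_11_101_morph_rho[of z0 L, OF Z0 L2] avoids_11_101_morph_rho[of z1 L, OF Z1 L2]
      e0 e1 o0(3) o1(3) g1]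
  show ?thesis
  proof (elim disjE exE conjE)
    fix u assume su0: "sublist (u @ [0]) (morph (subst_rho L) z0)"
      and su1: "sublist (u @ [1]) (morph (subst_rho L) z1)" and wu: "suffix w (morph (subst_pi g) u)"
    obtain a0 b0 where f0: "morph (subst_rho L) z0 = a0 @ u @ 0 # b0"
      using su0 by (auto simp: sublist_def)
    obtain a1 b1 where f1: "morph (subst_rho L) z1 = a1 @ u @ 1 # b1"
      using su1 by (auto simp: sublist_def)
    from right_special_desubst_rho[OF Z0 Z1 f0 f1 L2] show ?thesis
    proof (elim disjE exE conjE)
      fix j assume "u = replicate j 0" "j + 1 \<le> 2 * L 1"
      then show ?thesis using wu by (auto simp: morph_replicate)
    next
      fix v assume "sublist (v @ [0]) z0" "sublist (v @ [1]) z1" and uv: "suffix u (morph (subst_rho L) v)"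
      then have "right_special (shift_seq L) (shift_seq g) v"
        unfolding right_special_def in_lang_def z0_def z1_def by blast
      moreover have "suffix w (morph (subst_tau L g) v)"
        using wu morph_suffix[OF uv, of "subst_pi g"] by (auto simp: morph_pi_morph_rho)
      ultimately show ?thesis by blast
    qed
  qed blast
qed

section \<open>Classification of right special words\<close>

text \<open>The \<open>B n\<close> are nested suffixes, and \<open>rs_tail L g q\<close> is their common suffix of length \<open>q\<close>.\<close>

definition rs_tail :: "(nat \<Rightarrow> nat) \<Rightarrow> (nat \<Rightarrow> nat) \<Rightarrow> nat \<Rightarrow> nat list" where
  "rs_tail L g q = lastn q (rkB L g (Suc q))"

definition long_block :: "(nat \<Rightarrow> nat) \<Rightarrow> (nat \<Rightarrow> nat) \<Rightarrow> nat \<Rightarrow> nat list" where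
  "long_block L g n = concat (replicate (2 * g n) (rkB L g n @ [1])) @ rkB L g n"

text \<open>The last condition of \<open>range_BB\<close> is \<open>q \<le> (2 - 1 / L (n - 1)) h n\<close> without division.\<close>

definition range_BB :: "(nat \<Rightarrow> nat) \<Rightarrow> (nat \<Rightarrow> nat) \<Rightarrow> nat \<Rightarrow> nat \<Rightarrow> bool" where
  "range_BB L g n q \<longleftrightarrow> 2 \<le> n \<and> length (rkB L g n) < q \<and> L (n - 1) * q \<le> (2 * L (n - 1) - 1) * length (rkB L g n)"

definition range_long :: "(nat \<Rightarrow> nat) \<Rightarrow> (nat \<Rightarrow> nat) \<Rightarrow> nat \<Rightarrow> nat \<Rightarrow> bool" where
  "range_long L g n q \<longleftrightarrow> 1 \<le> n \<and> (g n + 1) * length (rkB L g n) + g n < q \<and>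
      q \<le> (2 * g n + 1) * length (rkB L g n) + 2 * g n"

definition rs_classified :: "(nat \<Rightarrow> nat) \<Rightarrow> (nat \<Rightarrow> nat) \<Rightarrow> nat list \<Rightarrow> bool" where
  "rs_classified L g w \<longleftrightarrow> w = rs_tail L g (length w) \<or>
     (\<exists>n. range_BB L g n (length w) \<and> w = lastn (length w) (rkB L g n @ rkB L g n)) \<or>
     (\<exists>n. range_long L g n (length w) \<and> w = lastn (length w) (long_block L g n))"

lemma suffix_rkB_eq_rs_tail:
  assumes "admissible L g" "suffix w (rkB L g M)"
  shows "w = rs_tail L g (length w)"
proof -
  define q where "q = length w"
  define N where "N = max M (Suc q)"
  have s1: "suffix w (rkB L g N)"
    using assms(2) suffix_rkB_mono[OF assms(1), of M N] suffix_order.order_trans by (simp add: N_def)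
  have lq: "q \<le> length (rkB L g (Suc q))" using length_rkB_ge[OF assms(1), of "Suc q"] by simp
  have s2: "suffix (rs_tail L g q) (rkB L g N)"
    using suffix_lastn[of q "rkB L g (Suc q)"] suffix_rkB_mono[OF assms(1), of "Suc q" N]
      suffix_order.order_trans by (simp add: rs_tail_def N_def)
  have "length (rs_tail L g q) = q" using length_lastn[OF lq] by (simp add: rs_tail_def)
  then show ?thesis using suffix_same_length_eq[OF s1 s2] by (simp add: q_def)
qed

lemma rs_classified_suffix_rkB:
  "admissible L g \<Longrightarrow> suffix w (rkB L g M) \<Longrightarrow> rs_classified L g w"
  unfolding rs_classified_def using suffix_rkB_eq_rs_tail by blast

lemma long_block_1: "long_block L g 1 = zigzag (2 * g 1)" by (simp add: long_block_def zigzag_def)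

lemma rs_classified_suffix_zigzag:
  assumes adm: "admissible L g" and w: "suffix w (zigzag (2 * g 1))"
  shows "rs_classified L g w"
proof (cases "length w \<le> 2 * g 1 + 1")
  case True
  have "suffix (zigzag (g 1)) (zigzag (2 * g 1))" by (rule suffix_zigzag_mono) simp
  then have "suffix w (block1 g)"
    using suffix_length_suffix[OF w] True by (simp add: length_zigzag block1_zigzag)
  then have "suffix w (rkB L g 2)" using suffix_block1_rkB_2[OF adm] by (rule suffix_order.order_trans)
  then show ?thesis by (rule rs_classified_suffix_rkB[OF adm])
next
  case False
  then have "range_long L g 1 (length w)"
    using suffix_length_le[OF w] by (simp add: range_long_def length_zigzag)
  moreover have "w = lastn (length w) (long_block L g 1)"
    unfolding long_block_1 using lastn_suffix[OF w] by simp
  ultimately show ?thesis unfolding rs_classified_def by blast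
qed

lemma rs_classified_suffix_block1_power:
  assumes adm: "admissible L g" and j: "j + 1 \<le> 2 * L 1"
    and w: "suffix w (concat (replicate j (block1 g)))"
  shows "rs_classified L g w"
proof -
  have "rkB L g 2 @ rkB L g 2 = concat (replicate (2 * L 1) (block1 g))"
    unfolding rkB_2 mult_2 replicate_add concat_append ..
  then have wBB: "suffix w (rkB L g 2 @ rkB L g 2)"
    using w suffix_concat_replicate_mono[of j "2 * L 1" "block1 g"] j suffix_order.order_trans by simp
  show ?thesis
  proof (cases "length w \<le> length (rkB L g 2)")
    case True
    moreover have "suffix (rkB L g 2) (rkB L g 2 @ rkB L g 2)" by (rule suffixI) (rule refl)
    ultimately have "suffix w (rkB L g 2)" using suffix_length_suffix[OF wBB] by blast
    then show ?thesis by (rule rs_classified_suffix_rkB[OF adm])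
  next
    case False
    have "length w \<le> j * length (block1 g)"
      using suffix_length_le[OF w] by (simp add: length_concat_replicate)
    also have "\<dots> \<le> (2 * L 1 - 1) * length (block1 g)" using j by (intro mult_le_mono1) simp
    finally have "L 1 * length w \<le> L 1 * ((2 * L 1 - 1) * length (block1 g))" by simp
    also have "\<dots> = (2 * L 1 - 1) * length (rkB L g 2)" by (simp add: rkB_2 length_concat_replicate)
    finally have "range_BB L g 2 (length w)" using False by (simp add: range_BB_def)
    moreover have "w = lastn (length w) (rkB L g 2 @ rkB L g 2)" using lastn_suffix[OF wBB] by simp
    ultimately show ?thesis unfolding rs_classified_def by blast
  qed
qed

lemma range_BB_le_block_power:
  assumes adm: "admissible L g" and R: "range_BB L g n q"
  shows "q \<le> (2 * L (n - 1) - 1) * length (block L g (n - 1))"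
proof -
  have n: "2 \<le> n" and ineq: "L (n - 1) * q \<le> (2 * L (n - 1) - 1) * length (rkB L g n)"
    using R by (auto simp: range_BB_def)
  have "1 \<le> n - 1" using n by simp
  with adm have "2 \<le> L (n - 1)" unfolding admissible_def by blast
  moreover have hn: "length (rkB L g n) = L (n - 1) * length (block L g (n - 1))"
    using rkB_Suc_block[of "n - 1" L g] n by (simp add: length_concat_replicate)
  moreover from hn have "L (n - 1) * q \<le> L (n - 1) * ((2 * L (n - 1) - 1) * length (block L g (n - 1)))"
    using ineq by (simp add: algebra_simps)
  ultimately show ?thesis by simp
qed

lemma suffix_lastn_BB_block_power:
  assumes adm: "admissible L g" and R: "range_BB L g n q"
  shows "suffix (lastn q (rkB L g n @ rkB L g n))
    (concat (replicate (2 * L (n - 1) - 1) (block L g (n - 1))))"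
proof -
  have "q \<le> length (concat (replicate (2 * L (n - 1) - 1) (block L g (n - 1))))"
    using range_BB_le_block_power[OF assms] by (simp add: length_concat_replicate)
  moreover have "2 \<le> n" using R by (simp add: range_BB_def)
  ultimately show ?thesis
    using rkB_rkB_block_power(1)[OF adm] suffix_lastn by (simp add: lastn_append_right)
qed

lemma morph_tau_block:
  "1 \<le> n \<Longrightarrow> morph (subst_tau L g) (block (shift_seq L) (shift_seq g) n) = block L g (Suc n)"
  by (simp add: block_def rkB_Suc_morph_tau subst_tau_def)

lemma morph_tau_long_block:
  "1 \<le> n \<Longrightarrow> morph (subst_tau L g) (long_block (shift_seq L) (shift_seq g) n) = long_block L g (Suc n)"
  by (simp add: long_block_def rkB_Suc_morph_tau subst_tau_def)

lemma long_block_eq: "long_block L g n = concat (replicate (g n) (rkB L g n @ [1])) @ block L g n"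
  by (simp add: long_block_def block_def mult_2 replicate_add)

lemma rs_classified_morph_tau_BB:
  fixes L g :: "nat \<Rightarrow> nat"
  defines "L' \<equiv> shift_seq L" and "g' \<equiv> shift_seq g"
  assumes adm: "admissible L g" and R: "range_BB L' g' n (length v)"
    and v: "v = lastn (length v) (rkB L' g' n @ rkB L' g' n)"
    and w: "suffix w (morph (subst_tau L g) v)" and short: "length (morph (subst_tau L g) (tl v)) < length w"
  shows "range_BB L g (Suc n) (length w) \<and> w = lastn (length w) (rkB L g (Suc n) @ rkB L g (Suc n))"
proof -
  have adm': "admissible L' g'" using admissible_shift_seq[OF adm] by (simp add: L'_def g'_def)
  have n: "2 \<le> n" and hv: "length (rkB L' g' n) < length v" using R by (auto simp: range_BB_def)
  define P where "P = morph (subst_tau L g) (block L' g' (n - 1))"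
  have Bn: "rkB L g (Suc n) = morph (subst_tau L g) (rkB L' g' n)"
    using rkB_Suc_morph_tau[of n L g] n by (simp add: L'_def g'_def)
  have "length (rkB L g (Suc n)) = L n * length P"
    using rkB_Suc_block[of "n - 1" L' g'] n unfolding Bn by (simp add: P_def L'_def length_concat_replicate)
  moreover have "length w \<le> (2 * L n - 1) * length P"
  proof -
    have "suffix v (concat (replicate (2 * L n - 1) (block L' g' (n - 1))))"
      using suffix_lastn_BB_block_power[OF adm' R] n v by (simp add: L'_def)
    from suffix_length_le[OF suffix_order.order_trans[OF w morph_suffix[OF this]]]
    show ?thesis by (simp add: P_def length_concat_replicate)
  qed
  ultimately have upper: "L n * length w \<le> (2 * L n - 1) * length (rkB L g (Suc n))" by simp
  have vBB: "suffix v (rkB L' g' n @ rkB L' g' n)" using v suffix_lastn by metis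
  have "suffix (rkB L' g' n) (tl v)"
    using suffix_length_suffix[OF suffixI[OF refl] suffix_order.order_trans[OF suffix_tl vBB]] hv by simp
  then have "length (rkB L g (Suc n)) < length w"
    using suffix_length_le[OF morph_suffix, of _ _ "subst_tau L g"] short unfolding Bn by fastforce
  moreover have "suffix w (rkB L g (Suc n) @ rkB L g (Suc n))"
    using suffix_order.order_trans[OF w morph_suffix[OF vBB]] by (simp add: Bn)
  ultimately show ?thesis using upper n by (simp add: range_BB_def lastn_suffix)
qed

lemma rs_classified_morph_tau_long:
  fixes L g :: "nat \<Rightarrow> nat"
  defines "L' \<equiv> shift_seq L" and "g' \<equiv> shift_seq g"
  assumes R: "range_long L' g' n (length v)" and v: "v = lastn (length v) (long_block L' g' n)"
    and w: "suffix w (morph (subst_tau L g) v)" and short: "length (morph (subst_tau L g) (tl v)) < length w"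
  shows "range_long L g (Suc n) (length w) \<and> w = lastn (length w) (long_block L g (Suc n))"
proof -
  have n: "1 \<le> n" and lo: "length (block L' g' n) < length v"
    using R by (auto simp: range_long_def length_block)
  have vW: "suffix v (long_block L' g' n)" using v suffix_lastn by metis
  have "suffix (block L' g' n) (long_block L' g' n)" unfolding long_block_eq by (rule suffixI[OF refl])
  then have "suffix (block L' g' n) (tl v)"
    using suffix_length_suffix[OF _ suffix_order.order_trans[OF suffix_tl vW]] lo by simp
  then have "length (block L g (Suc n)) < length w"
    using suffix_length_le[OF morph_suffix, of _ _ "subst_tau L g"] short morph_tau_block[OF n]
    unfolding L'_def g'_def by fastforce
  moreover have wW: "suffix w (long_block L g (Suc n))"
    using suffix_order.order_trans[OF w morph_suffix[OF vW]] morph_tau_long_block[OF n]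
    unfolding L'_def g'_def by simp
  moreover have "length w \<le> length (long_block L g (Suc n))" using suffix_length_le[OF wW] .
  ultimately show ?thesis
    by (simp add: range_long_def length_block long_block_def length_concat_replicate algebra_simps lastn_suffix)
qed

lemma rs_classified_morph_tau:
  assumes adm: "admissible L g" and v: "rs_classified (shift_seq L) (shift_seq g) v"
    and w: "suffix w (morph (subst_tau L g) v)" and short: "length (morph (subst_tau L g) (tl v)) < length w"
  shows "rs_classified L g w"
  using v[unfolded rs_classified_def]
proof (elim disjE exE conjE)
  assume "v = rs_tail (shift_seq L) (shift_seq g) (length v)"
  then have "suffix v (rkB (shift_seq L) (shift_seq g) (Suc (length v)))"
    using suffix_lastn by (metis rs_tail_def)
  then have "suffix w (rkB L g (Suc (Suc (length v))))"
    using suffix_order.order_trans[OF w morph_suffix] rkB_Suc_morph_tau[of "Suc (length v)" L g] by simp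
  then show "rs_classified L g w" by (rule rs_classified_suffix_rkB[OF adm])
next
  fix n assume "range_BB (shift_seq L) (shift_seq g) n (length v)"
    "v = lastn (length v) (rkB (shift_seq L) (shift_seq g) n @ rkB (shift_seq L) (shift_seq g) n)"
  from rs_classified_morph_tau_BB[OF adm this w short] show "rs_classified L g w"
    unfolding rs_classified_def by blast
next
  fix n assume "range_long (shift_seq L) (shift_seq g) n (length v)"
    "v = lastn (length v) (long_block (shift_seq L) (shift_seq g) n)"
  from rs_classified_morph_tau_long[OF this w short] show "rs_classified L g w"
    unfolding rs_classified_def by blast
qed

theorem right_special_classified:
  assumes "admissible L g" and "right_special L g w"
  shows "rs_classified L g w"
  using assms
proof (induction "length w" arbitrary: L g w rule: less_induct)
  case less
  note adm = less.prems(1)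
  have adm': "admissible (shift_seq L) (shift_seq g)" by (rule admissible_shift_seq[OF adm])
  from right_special_desubst[OF less.prems] show ?case
  proof (elim disjE exE conjE)
    assume "suffix w (zigzag (2 * g 1))"
    then show ?thesis by (rule rs_classified_suffix_zigzag[OF adm])
  next
    fix j assume "j + 1 \<le> 2 * L 1" "suffix w (concat (replicate j (block1 g)))"
    then show ?thesis by (rule rs_classified_suffix_block1_power[OF adm])
  next
    fix v assume rs: "right_special (shift_seq L) (shift_seq g) v"
      and wv: "suffix w (morph (subst_tau L g) v)"
    obtain v' where v': "suffix v' v" "suffix w (morph (subst_tau L g) v')"
      "v' \<noteq> [] \<longrightarrow> length (morph (subst_tau L g) (tl v')) < length w"
      using shortest_suffix_morph[OF wv] by blast
    have rs': "right_special (shift_seq L) (shift_seq g) v'" by (rule right_special_suffix[OF rs v'(1)])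
    show ?thesis
    proof (cases "tl v' = []")
      case True
      then have "v' = [] \<or> v' = [0]" using last_right_special[OF adm' rs'] by (cases v') auto
      then have "suffix w (rkB L g 2)" using v'(2) by (auto simp: subst_tau_def)
      then show ?thesis by (rule rs_classified_suffix_rkB[OF adm])
    next
      case False
      then have "last (tl v') = 0" using last_right_special[OF adm' rs'] by (cases v') auto
      then have "0 \<in> set (tl v')" using False last_in_set by metis
      then have "length v' < length w"
        using length_morph_tau_ge[OF adm, of "tl v'"] v'(3) False by auto
      then have "rs_classified (shift_seq L) (shift_seq g) v'" using less.hyps adm' rs' by blast
      moreover have "v' \<noteq> []" using False by auto
      ultimately show ?thesis using rs_classified_morph_tau[OF adm _ v'(2)] v'(3) by blast
    qed
  qed
qed

lemma sublist_rkB_rkB_1: assumes "admissible L g" "1 \<le> n"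
  shows "sublist (rkB L g n @ rkB L g n @ [1]) (rkB L g (Suc n))"
proof -
  obtain pre where pre: "block L g n = pre @ rkB L g n"
    using block_ends[of g n L] assms by (auto simp: admissible_def)
  obtain r2 where r2: "block L g n = rkB L g n @ [1] @ r2"
    using block_starts[of g n L] assms by (auto simp: admissible_def)
  obtain r where r: "rkB L g (Suc n) = block L g n @ block L g n @ r" using rkB_Suc_starts_block_block[OF assms] by blast
  have "rkB L g (Suc n) = pre @ (rkB L g n @ rkB L g n @ [1]) @ (r2 @ r)"
    using r by (subst (asm) pre, subst (asm) r2) simp
  then show ?thesis by (rule sublist_middle)
qed

lemma sublist_rkB_0:
  assumes "admissible L g" "1 \<le> n"
  shows "sublist (rkB L g n @ [0]) (rkB L g (Suc n))"
proof -
  have "hd (rkB L g n) = 0" "rkB L g n \<noteq> []" using rkB_ends_0[OF assms(1)] by auto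
  then have "prefix (rkB L g n @ [0]) (rkB L g n @ rkB L g n @ [1])"
    by (cases "rkB L g n") (auto simp: prefix_def)
  then show ?thesis using sublist_rkB_rkB_1[OF assms] prefix_imp_sublist sublist_order.order_trans by blast
qed

lemma sublist_rkB_1:
  assumes "admissible L g" "1 \<le> n"
  shows "sublist (rkB L g n @ [1]) (rkB L g (Suc n))"
proof -
  obtain r where "rkB L g (Suc n) = rkB L g n @ [1] @ rkB L g n @ r" using rkB_Suc_starts[OF assms] by blast
  then show ?thesis using sublist_middle[of _ "[]" "rkB L g n @ [1]"] by simp
qed

lemma right_special_suffix_rkB:
  assumes "admissible L g" "suffix w (rkB L g M)"
  shows "right_special L g w"
proof -
  define N where "N = max M 1"
  have sN: "suffix w (rkB L g N)"
    using assms(2) suffix_rkB_mono[OF assms(1), of M N] suffix_order.order_trans by (simp add: N_def)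
  obtain p where p: "rkB L g N = p @ w" using sN by (auto simp: suffix_def)
  have "sublist (rkB L g N @ [0]) (rkB L g (Suc N))" by (rule sublist_rkB_0[OF assms(1)]) (simp add: N_def)
  moreover have "sublist (w @ [0]) (rkB L g N @ [0])" unfolding p by (rule sublist_middle[of _ p _ "[]"]) simp
  ultimately have "in_lang L g (w @ [0])" using in_lang_rkB sublist_order.order_trans by blast
  moreover have "sublist (rkB L g N @ [1]) (rkB L g (Suc N))" by (rule sublist_rkB_1[OF assms(1)]) (simp add: N_def)
  moreover have "sublist (w @ [1]) (rkB L g N @ [1])" unfolding p by (rule sublist_middle[of _ p _ "[]"]) simp
  ultimately show ?thesis unfolding right_special_def using in_lang_rkB sublist_order.order_trans by blast
qed

lemma right_special_rs_tail: assumes "admissible L g" shows "right_special L g (rs_tail L g q)"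
  unfolding rs_tail_def by (rule right_special_suffix_rkB[OF assms suffix_lastn])

lemma right_special_lastn_BB:
  assumes adm: "admissible L g" and R: "range_BB L g n q"
  shows "right_special L g (lastn q (rkB L g n @ rkB L g n))"
proof -
  define w where "w = lastn q (rkB L g n @ rkB L g n)"
  define P where "P = block L g (n - 1)"
  have n: "2 \<le> n" "1 \<le> n" using R by (auto simp: range_BB_def)
  obtain p where "concat (replicate (2 * L (n - 1) - 1) P) = p @ w"
    using suffix_lastn_BB_block_power[OF adm R] by (auto simp: w_def P_def suffix_def)
  moreover have "P = 0 # tl P" using block_ends_0[OF adm, of "n - 1"] unfolding P_def by (metis list.collapse)
  ultimately have "rkB L g n @ rkB L g n @ [1] = p @ (w @ [0]) @ (tl P @ [1])"
    using rkB_rkB_block_power(2)[OF adm n(1)] by (metis P_def append.assoc append_Cons append_Nil)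
  then have "sublist (w @ [0]) (rkB L g n @ rkB L g n @ [1])" by (rule sublist_middle)
  moreover have "suffix (w @ [1]) (rkB L g n @ rkB L g n @ [1])"
    using suffix_lastn[of q "rkB L g n @ rkB L g n"] by (auto simp: w_def suffix_def)
  ultimately show ?thesis
    using sublist_rkB_rkB_1[OF adm n(2)] in_lang_rkB sublist_order.order_trans suffix_imp_sublist
    unfolding right_special_def w_def by blast
qed

lemma sublist_long_block_context: assumes adm: "admissible L g" and n1: "1 \<le> n"
  shows "sublist ((rkB L g n @ [1]) @ long_block L g n @ rkB L g n) (rkB L g (Suc (Suc n)))"
proof -
  define Bn where "Bn = rkB L g n"
  define Y where "Y = Bn @ [1]"
  define P where "P = block L g n"
  define G where "G = g n"
  have Pd: "P = concat (replicate G Y) @ Bn" by (simp add: P_def block_def Y_def Bn_def G_def)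
  obtain r where r: "rkB L g (Suc (Suc n)) = rkB L g (Suc n) @ [1] @ rkB L g (Suc n) @ r"
    using rkB_Suc_starts[OF adm, of "Suc n"] by auto
  obtain pre where pre: "rkB L g (Suc n) = pre @ P @ P" using rkB_Suc_ends_block_block[OF adm n1] by (auto simp: P_def)
  obtain r2 where r2: "rkB L g (Suc n) = P @ P @ r2" using rkB_Suc_starts_block_block[OF adm n1] by (auto simp: P_def)
  obtain post where post: "P = Bn @ post"
    using block_starts[of g n L] adm n1 by (auto simp: admissible_def P_def Bn_def)
  have A: "rkB L g (Suc (Suc n)) = (pre @ P) @ (P @ [1] @ P @ Bn) @ (post @ r2 @ r)"
  proof -
    have "rkB L g (Suc (Suc n)) = (pre @ P @ P) @ [1] @ (P @ (Bn @ post) @ r2) @ r"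
      using r by (subst (asm) pre, subst (asm) r2, subst (asm) (2) post) simp
    then show ?thesis by simp
  qed
  have B: "P @ [1] @ P @ Bn = Y @ long_block L g n @ Bn"
  proof -
    have "P @ [1] @ P @ Bn = concat (replicate G Y) @ Y @ concat (replicate G Y) @ Bn @ Bn"
      by (simp add: Pd Y_def)
    also have "\<dots> = Y @ concat (replicate (G + G) Y) @ Bn @ Bn"
      using concat_replicate_middle[of G Y G] by simp
    finally show ?thesis by (simp add: long_block_def Y_def Bn_def G_def mult_2)
  qed
  have "rkB L g (Suc (Suc n)) = (pre @ P) @ (Y @ long_block L g n @ Bn) @ (post @ r2 @ r)"
    using A by (simp only: B)
  then show ?thesis unfolding Y_def Bn_def by (rule sublist_middle)
qed

lemma right_special_lastn_long_block:
  assumes adm: "admissible L g" and R: "range_long L g n q"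
  shows "right_special L g (lastn q (long_block L g n))"
proof -
  have n1: "1 \<le> n" using R by (simp add: range_long_def)
  define Bn where "Bn = rkB L g n"
  define Y where "Y = Bn @ [1]"
  define G where "G = g n"
  have Bne: "Bn \<noteq> [] \<and> hd Bn = 0" using rkB_ends_0[OF adm] by (simp add: Bn_def)
  have W: "long_block L g n = concat (replicate (2 * G) Y) @ Bn" by (simp add: long_block_def Y_def Bn_def G_def)
  have X: "sublist (Y @ long_block L g n @ Bn) (rkB L g (Suc (Suc n)))" using sublist_long_block_context[OF adm n1] by (simp add: Y_def Bn_def)
  have W1: "long_block L g n @ [1] = concat (replicate (2 * G) Y) @ Y" by (simp add: W Y_def)
  have "Y @ concat (replicate (2 * G) Y) = concat (replicate (2 * G) Y) @ Y"
    using concat_replicate_middle[of 0 Y "2 * G"] concat_replicate_middle[of "2 * G" Y 0] by simp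
  then have C: "Y @ concat (replicate (2 * G) Y) = concat (replicate (2 * G) Y) @ Y" .
  have "Y @ long_block L g n @ Bn = (Y @ concat (replicate (2 * G) Y)) @ Bn @ Bn" unfolding W by simp
  also have "\<dots> = (concat (replicate (2 * G) Y) @ Y) @ Bn @ Bn" unfolding C ..
  also have "\<dots> = (long_block L g n @ [1]) @ Bn @ Bn" unfolding W1 ..
  finally have e: "Y @ long_block L g n @ Bn = (long_block L g n @ [1]) @ Bn @ Bn" .
  have "sublist (long_block L g n @ [1]) (Y @ long_block L g n @ Bn)" unfolding e by (rule sublist_append_rightI)
  then have l1: "in_lang L g (long_block L g n @ [1])" using X in_lang_rkB sublist_order.order_trans by blast
  have "long_block L g n @ Bn = (long_block L g n @ [0]) @ tl Bn" using Bne by (cases Bn) auto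
  then have "Y @ long_block L g n @ Bn = Y @ (long_block L g n @ [0]) @ tl Bn" by simp
  then have "sublist (long_block L g n @ [0]) (Y @ long_block L g n @ Bn)" by (rule sublist_middle)
  then have l0: "in_lang L g (long_block L g n @ [0])" using X in_lang_rkB sublist_order.order_trans by blast
  obtain p where p: "long_block L g n = p @ lastn q (long_block L g n)" using suffix_lastn[of q "long_block L g n"] by (auto simp: suffix_def)
  have "sublist (lastn q (long_block L g n) @ [0]) (long_block L g n @ [0])" by (subst (2) p) (rule sublist_middle, simp)
  moreover have "sublist (lastn q (long_block L g n) @ [1]) (long_block L g n @ [1])" by (subst (2) p) (rule sublist_middle, simp)
  ultimately show ?thesis using l0 l1 in_lang_sublist unfolding right_special_def by blast
qed

lemma rs_tail_eq_lastn_rkB: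
  assumes "admissible L g" "q \<le> length (rkB L g M)"
  shows "rs_tail L g q = lastn q (rkB L g M)"
proof -
  have "lastn q (rkB L g M) = rs_tail L g (length (lastn q (rkB L g M)))" by (rule suffix_rkB_eq_rs_tail[OF assms(1) suffix_lastn])
  then show ?thesis using length_lastn[OF assms(2)] by simp
qed

lemma range_BB_bounds: assumes "admissible L g" "range_BB L g n q"
  shows "length (rkB L g n) < q \<and> q \<le> 2 * length (rkB L g n) \<and> 2 \<le> n"
proof -
  have n2: "2 \<le> n" and h: "length (rkB L g n) < q" and i: "L (n - 1) * q \<le> (2 * L (n - 1) - 1) * length (rkB L g n)"
    using assms(2) by (auto simp: range_BB_def)
  have "1 \<le> n - 1" using n2 by simp
  with assms(1) have "2 \<le> L (n - 1)" unfolding admissible_def by blast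
  then have L1: "1 \<le> L (n - 1)" by simp
  have "L (n - 1) * q \<le> L (n - 1) * (2 * length (rkB L g n))"
    using i by (rule order_trans) (simp add: algebra_simps)
  then show ?thesis using L1 h n2 by simp
qed

lemma range_BB_not_range_long:
  assumes "admissible L g" "range_BB L g n q"
  shows "\<not> range_long L g n q"
proof
  assume "range_long L g n q"
  then have "(g n + 1) * length (rkB L g n) + g n < q" by (simp add: range_long_def)
  moreover have "1 \<le> g n" using assms range_BB_bounds[OF assms] by (simp add: admissible_def)
  moreover have "q \<le> 2 * length (rkB L g n)" using range_BB_bounds[OF assms] by simp
  moreover have "2 * length (rkB L g n) \<le> (g n + 1) * length (rkB L g n)"
    using \<open>1 \<le> g n\<close> by (intro mult_le_mono1) simp
  ultimately show False by linarith
qed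

lemma rs_tail_ne_lastn_BB:
  assumes adm: "admissible L g" and R: "range_BB L g n q"
  shows "rs_tail L g q \<noteq> lastn q (rkB L g n @ rkB L g n)"
proof -
  have q: "length (rkB L g n) < q" "q \<le> 2 * length (rkB L g n)" "1 \<le> n"
    using range_BB_bounds[OF adm R] by auto
  obtain r where r: "rkB L g (Suc n) = (r @ rkB L g n @ [1]) @ rkB L g n"
    using rkB_Suc_ends[OF adm q(3)] by auto
  have "rs_tail L g q = lastn q (rkB L g (Suc n))"
    using q(2) r by (intro rs_tail_eq_lastn_rkB[OF adm]) simp
  moreover have "last (rkB L g n) = 0" using rkB_ends_0[OF adm] by blast
  then have "lastn q ((r @ rkB L g n @ [1]) @ rkB L g n) \<noteq> lastn q (rkB L g n @ rkB L g n)"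
    using q by (intro lastn_append_ne) auto
  ultimately show ?thesis using r by simp
qed

lemma rs_tail_ne_lastn_long_block:
  assumes adm: "admissible L g" and R: "range_long L g n q"
  shows "rs_tail L g q \<noteq> lastn q (long_block L g n)"
proof -
  have n: "1 \<le> n" and q: "length (block L g n) < q" "q \<le> length (long_block L g n)"
    using R by (auto simp: range_long_def length_block long_block_def length_concat_replicate algebra_simps)
  obtain r where r: "rkB L g (Suc n) = (r @ block L g n) @ block L g n"
    using rkB_Suc_ends_block_block[OF adm n] by auto
  have qS: "q \<le> length (rkB L g (Suc n))"
    using q(2) length_rkB_Suc_ge[OF adm n] by (simp add: long_block_def length_concat_replicate algebra_simps)
  obtain k where "g n = Suc k" using admissibleD(2)[OF adm n] by (cases "g n") auto
  then have "last (concat (replicate (g n) (rkB L g n @ [1]))) = 1"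
    by (simp only: concat_replicate_Suc_right) simp
  then have "lastn q ((r @ block L g n) @ block L g n) \<noteq> lastn q (long_block L g n)"
    unfolding long_block_eq using q qS r block_ends_0[OF adm, of n]
    by (intro lastn_append_ne) (auto simp: long_block_eq)
  moreover have "rs_tail L g q = lastn q (rkB L g (Suc n))" by (rule rs_tail_eq_lastn_rkB[OF adm qS])
  ultimately show ?thesis using r by simp
qed

lemma range_BB_level: assumes "admissible L g" "range_BB L g m q"
  shows "length (rkB L g m) < q \<and> q \<le> length (rkB L g (Suc m)) \<and> 1 \<le> m"
proof -
  have b: "length (rkB L g m) < q" "q \<le> 2 * length (rkB L g m)" "2 \<le> m" using range_BB_bounds[OF assms] by auto
  have m1: "1 \<le> m" using b by simp
  have g1: "1 \<le> g m" using assms(1) m1 by (simp add: admissible_def)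
  have "2 * length (rkB L g m) \<le> (2 * g m + 1) * length (rkB L g m)"
    using g1 by (intro mult_le_mono1) simp
  then show ?thesis using length_rkB_Suc_ge[OF assms(1) m1] b by linarith
qed

lemma range_long_level: assumes "admissible L g" "range_long L g m q"
  shows "length (rkB L g m) < q \<and> q \<le> length (rkB L g (Suc m)) \<and> 1 \<le> m"
proof -
  have m1: "1 \<le> m" and lo: "(g m + 1) * length (rkB L g m) + g m < q"
    and up: "q \<le> (2 * g m + 1) * length (rkB L g m) + 2 * g m" using assms(2) by (auto simp: range_long_def)
  have "length (rkB L g m) \<le> (g m + 1) * length (rkB L g m)" by simp
  then show ?thesis using length_rkB_Suc_ge[OF assms(1) m1] lo up m1 by linarith
qed

lemma range_level_unique:
  assumes adm: "admissible L g" and n: "1 \<le> n" "q \<le> length (rkB L g (Suc n))"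
    and lvl: "n = 1 \<or> length (rkB L g n) < q" and m: "range_BB L g m q \<or> range_long L g m q"
  shows "m = n"
proof -
  have m: "1 \<le> m" "length (rkB L g m) < q" "q \<le> length (rkB L g (Suc m))"
    using m range_BB_level[OF adm] range_long_level[OF adm] by blast+
  have "\<not> n < m" using length_rkB_mono[OF adm, of "Suc n" m] n(2) m(2) by auto
  moreover have "\<not> m < n" using length_rkB_mono[OF adm, of "Suc m" n] lvl m by auto
  ultimately show ?thesis by simp
qed

definition rs_words :: "(nat \<Rightarrow> nat) \<Rightarrow> (nat \<Rightarrow> nat) \<Rightarrow> nat \<Rightarrow> nat list set" where
  "rs_words L g q = {w. length w = q \<and> right_special L g w}"

lemma rs_words_level:
  assumes adm: "admissible L g" and n: "1 \<le> n" "q \<le> length (rkB L g (Suc n))"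
    and lvl: "n = 1 \<or> length (rkB L g n) < q"
  shows "rs_words L g q = {rs_tail L g q}
    \<union> (if range_BB L g n q then {lastn q (rkB L g n @ rkB L g n)} else {})
    \<union> (if range_long L g n q then {lastn q (long_block L g n)} else {})" (is "_ = ?S")
proof
  show "rs_words L g q \<subseteq> ?S"
  proof
    fix w assume "w \<in> rs_words L g q"
    then have "rs_classified L g w" and lw: "length w = q"
      using right_special_classified adm by (auto simp: rs_words_def)
    then show "w \<in> ?S"
      using range_level_unique[OF adm n lvl] by (auto simp: rs_classified_def)
  qed
next
  have "length (rs_tail L g q) = q"
    unfolding rs_tail_def using length_rkB_ge[OF adm, of "Suc q"] by (intro length_lastn) simp
  moreover have "length (lastn q (rkB L g n @ rkB L g n)) = q" if "range_BB L g n q"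
    using range_BB_bounds[OF adm that] by (intro length_lastn) simp
  moreover have "length (lastn q (long_block L g n)) = q" if "range_long L g n q"
    using that by (intro length_lastn) (simp add: range_long_def long_block_def length_concat_replicate algebra_simps)
  ultimately show "?S \<subseteq> rs_words L g q"
    using right_special_rs_tail[OF adm] right_special_lastn_BB[OF adm] right_special_lastn_long_block[OF adm]
    by (auto simp: rs_words_def)
qed

lemma card_rs_words:
  assumes adm: "admissible L g" and "1 \<le> n" "q \<le> length (rkB L g (Suc n))"
    and "n = 1 \<or> length (rkB L g n) < q"
  shows "card (rs_words L g q) = 1 + of_bool (range_BB L g n q) + of_bool (range_long L g n q)"
proof (cases "range_BB L g n q")
  case True
  then show ?thesis
    using rs_words_level[OF assms] range_BB_not_range_long[OF adm True] rs_tail_ne_lastn_BB[OF adm True]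
    by auto
next
  case False
  then show ?thesis
    using rs_words_level[OF assms] rs_tail_ne_lastn_long_block[OF adm, of n q] by auto
qed

section \<open>Complexity\<close>

definition lang_words :: "(nat \<Rightarrow> nat) \<Rightarrow> (nat \<Rightarrow> nat) \<Rightarrow> nat \<Rightarrow> nat list set" where
  "lang_words L g q = {w. length w = q \<and> in_lang L g w}"

lemma finite_lang_words: "finite (lang_words L g q)"
proof -
  have "lang_words L g q \<subseteq> {w. set w \<subseteq> {0,1} \<and> length w = q}" using set_in_lang by (auto simp: lang_words_def)
  moreover have "finite {w. set w \<subseteq> {0::nat,1} \<and> length w = q}" by (rule finite_lists_length_eq) simp
  ultimately show ?thesis by (rule finite_subset)
qed

lemma in_lang_extend:
  assumes adm: "admissible L g" and lw: "in_lang L g w"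
  shows "in_lang L g (w @ [0]) \<or> in_lang L g (w @ [1])"
proof -
  obtain N where "sublist w (rkB L g N)" using lw by (auto simp: in_lang_def)
  then have "sublist w (rkB L g (max N 1))" using sublist_rkB_mono[OF adm] by simp
  then obtain a b where ab: "rkB L g (max N 1) = a @ w @ b" by (auto simp: sublist_def)
  obtain r where r: "rkB L g (Suc (max N 1)) = rkB L g (max N 1) @ [1] @ rkB L g (max N 1) @ r"
    using rkB_Suc_starts[OF adm, of "max N 1"] by auto
  define t where "t = b @ 1 # rkB L g (max N 1) @ r"
  have tne: "t \<noteq> []" by (simp add: t_def)
  have e: "rkB L g (Suc (max N 1)) = a @ (w @ [hd t]) @ tl t" using r ab tne by (simp add: t_def)
  then have sl: "in_lang L g (w @ [hd t])" using in_lang_rkB sublist_middle by metis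
  have "hd t \<in> set (rkB L g (Suc (max N 1)))" using e by simp
  then have "hd t = 0 \<or> hd t = 1" using set_rkB[of L g "Suc (max N 1)"] by auto
  then show ?thesis using sl by auto
qed

lemma card_lang_words_Suc: assumes adm: "admissible L g"
  shows "card (lang_words L g (Suc q)) = card (lang_words L g q) + card (rs_words L g q)"
proof -
  define E0 where "E0 = {w \<in> lang_words L g q. in_lang L g (w @ [0])}"
  define E1 where "E1 = {w \<in> lang_words L g q. in_lang L g (w @ [1])}"
  have fin: "finite E0" "finite E1" using finite_lang_words[of L g q] by (auto simp: E0_def E1_def)
  have eq: "lang_words L g (Suc q) = (\<lambda>w. w @ [0]) ` E0 \<union> (\<lambda>w. w @ [1]) ` E1"
  proof
    show "lang_words L g (Suc q) \<subseteq> (\<lambda>w. w @ [0]) ` E0 \<union> (\<lambda>w. w @ [1]) ` E1"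
    proof
      fix v assume "v \<in> lang_words L g (Suc q)"
      then have lv: "length v = Suc q" and lgv: "in_lang L g v" by (auto simp: lang_words_def)
      then have vne: "v \<noteq> []" by auto
      have ve: "v = butlast v @ [last v]" using vne by simp
      have "last v \<in> set v" using vne by simp
      then have lb: "last v = 0 \<or> last v = 1" using set_in_lang[OF lgv] by auto
      have "in_lang L g (butlast v)" using lgv in_lang_sublist by (metis ve sublist_append_rightI)
      then have "butlast v \<in> lang_words L g q" using lv by (simp add: lang_words_def)
      then show "v \<in> (\<lambda>w. w @ [0]) ` E0 \<union> (\<lambda>w. w @ [1]) ` E1"
        using lb lgv ve unfolding E0_def E1_def by (metis (no_types, lifting) Un_iff image_eqI mem_Collect_eq)
    qed
  next
    show "(\<lambda>w. w @ [0]) ` E0 \<union> (\<lambda>w. w @ [1]) ` E1 \<subseteq> lang_words L g (Suc q)"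
      by (auto simp: E0_def E1_def lang_words_def)
  qed
  have disj: "(\<lambda>w. w @ [0]) ` E0 \<inter> (\<lambda>w. w @ [1]) ` E1 = {}" by auto
  have inj0: "inj_on (\<lambda>w. w @ [0::nat]) E0" by (auto simp: inj_on_def)
  have inj1: "inj_on (\<lambda>w. w @ [1::nat]) E1" by (auto simp: inj_on_def)
  have "card (lang_words L g (Suc q)) = card E0 + card E1"
    unfolding eq using card_Un_disjoint[OF finite_imageI[OF fin(1)] finite_imageI[OF fin(2)] disj]
      card_image[OF inj0] card_image[OF inj1] by simp
  also have "\<dots> = card (E0 \<union> E1) + card (E0 \<inter> E1)" using card_Un_Int[OF fin] .
  also have "E0 \<union> E1 = lang_words L g q" using in_lang_extend[OF adm] by (auto simp: E0_def E1_def lang_words_def)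
  also have "E0 \<inter> E1 = rs_words L g q" by (auto simp: E0_def E1_def lang_words_def rs_words_def right_special_def dest: in_lang_sublist)
  finally show ?thesis .
qed

lemma card_lang_words_sum:
  assumes adm: "admissible L g"
  shows "card (lang_words L g q) = 1 + (\<Sum>r<q. card (rs_words L g r))"
proof (induction q)
  case 0
  have "lang_words L g 0 = {[]}" by (auto simp: lang_words_def in_lang_def)
  then show ?case by simp
next
  case (Suc q)
  then show ?case using card_lang_words_Suc[OF adm, of q] by simp
qed

context
  fixes L g :: "nat \<Rightarrow> nat"
  assumes adm: "admissible L g"
begin

definition hgt :: "nat \<Rightarrow> nat" where "hgt n = length (rkB L g n)"

text \<open>
  A point of the subshift containing every factor: \<open>B n\<close> is placed on the positions
  \<open>[- offset n, hgt n - offset n)\<close>. This is consistent because \<open>B (n + 1)\<close> starts with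
  \<open>B n 1 B n\<close> and \<open>offset (n + 1) = offset n + hgt n + 1\<close>.
\<close>

definition offset :: "nat \<Rightarrow> nat" where "offset n = (\<Sum>k\<in>{1..<n}. hgt k + 1)"

lemma offset_Suc: "1 \<le> n \<Longrightarrow> offset (Suc n) = offset n + hgt n + 1"
  by (simp add: offset_def)

lemma offset_1: "offset (Suc 0) = 0" unfolding offset_def by simp

lemma hgt_Suc_ge: "1 \<le> n \<Longrightarrow> 4 * hgt n + 2 \<le> hgt (Suc n)"
proof -
  assume n1: "1 \<le> n"
  have "2 \<le> L n" "1 \<le> g n" using adm n1 by (auto simp: admissible_def)
  have "1 * hgt n \<le> g n * hgt n" using \<open>1 \<le> g n\<close> by (rule mult_le_mono1)
  moreover have "(g n + 1) * hgt n = g n * hgt n + hgt n" by (simp add: distrib_right)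
  ultimately have "2 * hgt n + 1 \<le> (g n + 1) * hgt n + g n" using \<open>1 \<le> g n\<close> by linarith
  then have "2 * (2 * hgt n + 1) \<le> 2 * ((g n + 1) * hgt n + g n)" by simp
  also have "\<dots> \<le> L n * ((g n + 1) * hgt n + g n)" using \<open>2 \<le> L n\<close> by (rule mult_le_mono1)
  finally show ?thesis using length_rkB_Suc[OF n1] by (simp add: hgt_def)
qed

lemma hgt_pos: "1 \<le> hgt n" using length_rkB_pos[OF adm] by (simp add: hgt_def)

lemma offset_ge: assumes "1 \<le> n" shows "2 * (n - 1) \<le> offset n"
  using assms
proof (induction n rule: dec_induct)
  case base then show ?case by (simp add: offset_1)
next
  case (step n) then show ?case using offset_Suc[of n] hgt_pos[of n] by simp
qed

lemma offset_plus_le_hgt: assumes "1 \<le> n" shows "offset n + n \<le> hgt n"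
  using assms
proof (induction n rule: dec_induct)
  case base then show ?case by (simp add: offset_1 hgt_def)
next
  case (step n) then show ?case using offset_Suc[of n] hgt_Suc_ge[of n] by simp
qed

lemma offset_hgt_nest:
  assumes "1 \<le> n" "n \<le> m"
  shows "offset m + hgt n \<le> hgt m + offset n"
  using assms(2)
proof (induction m rule: dec_induct)
  case base then show ?case by simp
next
  case (step m)
  have "1 \<le> m" using step assms(1) by simp
  then show ?case using step offset_Suc[of m] hgt_Suc_ge[of m] by simp
qed

lemma offset_mono: assumes "1 \<le> n" "n \<le> m" shows "offset n \<le> offset m"
  using assms(2)
proof (induction m rule: dec_induct)
  case base then show ?case by simp
next
  case (step m) then show ?case using offset_Suc[of m] assms(1) by simp
qed

lemma nth_rkB_offset: assumes n1: "1 \<le> n" and nm: "n \<le> m" and jh: "j < hgt n"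
  shows "rkB L g m ! (j + offset m - offset n) = rkB L g n ! j"
  using nm
proof (induction m rule: dec_induct)
  case base then show ?case by simp
next
  case (step m)
  have m1: "1 \<le> m" using step n1 by simp
  obtain r where r: "rkB L g (Suc m) = rkB L g m @ [1] @ rkB L g m @ r" using rkB_Suc_starts[OF adm m1] by blast
  define k where "k = j + offset m - offset n"
  have kl: "k < hgt m" using offset_hgt_nest[OF n1 step.hyps(1)] jh offset_mono[OF n1 step.hyps(1)]
    by (simp add: k_def)
  have e: "j + offset (Suc m) - offset n = hgt m + 1 + k"
    using offset_Suc[OF m1] offset_mono[OF n1 step.hyps(1)] by (simp add: k_def)
  have "rkB L g (Suc m) ! (hgt m + 1 + k) = rkB L g m ! k"
    unfolding r using kl by (simp add: nth_append hgt_def)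
  then show ?case using e step.IH by (simp add: k_def)
qed

definition level_at :: "int \<Rightarrow> nat" where "level_at i = nat \<bar>i\<bar> + 1"

definition limit_point :: "int \<Rightarrow> nat" where
  "limit_point i = rkB L g (level_at i) ! nat (i + int (offset (level_at i)))"

lemma offset_in_range:
  assumes "1 \<le> n" "nat \<bar>i\<bar> + 1 \<le> n"
  shows "0 \<le> i + int (offset n)" "i + int (offset n) < int (hgt n)"
proof -
  have "2 * (n - 1) \<le> offset n" by (rule offset_ge[OF assms(1)])
  then show "0 \<le> i + int (offset n)" using assms by linarith
  have "offset n + n \<le> hgt n" by (rule offset_plus_le_hgt[OF assms(1)])
  then show "i + int (offset n) < int (hgt n)" using assms by linarith
qed

lemma limit_point_eq:
  assumes n1: "1 \<le> n" and v: "0 \<le> i + int (offset n)" "i + int (offset n) < int (hgt n)"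
  shows "limit_point i = rkB L g n ! nat (i + int (offset n))"
proof -
  define N where "N = level_at i"
  have N1: "1 \<le> N" by (simp add: N_def level_at_def)
  have vN: "0 \<le> i + int (offset N)" "i + int (offset N) < int (hgt N)" using offset_in_range[OF N1] by (simp_all add: N_def level_at_def)
  define m where "m = max n N"
  have "rkB L g m ! (nat (i + int (offset n)) + offset m - offset n) = rkB L g n ! nat (i + int (offset n))"
    using nth_rkB_offset[OF n1, of m "nat (i + int (offset n))"] v by (simp add: m_def)
  moreover have "rkB L g m ! (nat (i + int (offset N)) + offset m - offset N) = rkB L g N ! nat (i + int (offset N))"
    using nth_rkB_offset[OF N1, of m "nat (i + int (offset N))"] vN by (simp add: m_def)
  moreover have "nat (i + int (offset n)) + offset m - offset n = nat (i + int (offset N)) + offset m - offset N"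
    using v vN offset_mono[OF n1, of m] offset_mono[OF N1, of m] by (simp add: m_def)
  ultimately show ?thesis by (simp add: limit_point_def N_def)
qed

lemma window_limit_point_sublist:
  "sublist (window limit_point i m) (rkB L g (nat \<bar>i\<bar> + m + 1))"
proof -
  define n where "n = nat \<bar>i\<bar> + m + 1"
  have n1: "1 \<le> n" by (simp add: n_def)
  have l: "2 * (n - 1) \<le> offset n" by (rule offset_ge[OF n1])
  have r: "offset n + n \<le> hgt n" by (rule offset_plus_le_hgt[OF n1])
  define d where "d = nat (i + int (offset n))"
  have d0: "0 \<le> i + int (offset n)" using l by (simp add: n_def)
  have dm: "d + m \<le> hgt n" using r d0 by (simp add: d_def n_def) linarith
  have "window limit_point i m = take m (drop d (rkB L g n))"
  proof (rule nth_equalityI)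
    show "length (window limit_point i m) = length (take m (drop d (rkB L g n)))"
      using dm by (simp add: window_def hgt_def)
  next
    fix j assume "j < length (window limit_point i m)"
    then have jm: "j < m" by (simp add: window_def)
    have "limit_point (i + int j) = rkB L g n ! nat (i + int j + int (offset n))"
      by (rule limit_point_eq[OF n1]) (use d0 dm jm d_def in linarith)+
    moreover have "nat (i + int j + int (offset n)) = d + j" using d0 by (simp add: d_def)
    ultimately show "window limit_point i m ! j = take m (drop d (rkB L g n)) ! j"
      using jm dm by (simp add: window_def hgt_def)
  qed
  moreover have "sublist (take m (drop d (rkB L g n))) (rkB L g n)"
    using sublist_take sublist_drop sublist_order.order_trans by blast
  ultimately show ?thesis by (simp add: n_def)
qed

lemma limit_point_in_subshift: "limit_point \<in> subshift (rkB L g)"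
proof -
  have "\<forall>i. limit_point i \<in> {0,1}"
  proof
    fix i
    have v: "0 \<le> i + int (offset (level_at i))" "i + int (offset (level_at i)) < int (hgt (level_at i))"
      using offset_in_range[of "level_at i" i] by (simp_all add: level_at_def)
    then have "nat (i + int (offset (level_at i))) < length (rkB L g (level_at i))" by (simp add: hgt_def)
    then have "limit_point i \<in> set (rkB L g (level_at i))" unfolding limit_point_def by (rule nth_mem)
    then show "limit_point i \<in> {0,1}" using set_rkB by blast
  qed
  moreover have "\<forall>i m. \<exists>n\<ge>1. sublist (window limit_point i m) (rkB L g n)"
    using window_limit_point_sublist by (metis le_add2)
  ultimately show ?thesis by (simp add: subshift_def)
qed

lemma in_lang_window_limit_point:
  assumes "in_lang L g w"
  shows "\<exists>i. w = window limit_point i (length w)"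
proof -
  obtain N where "sublist w (rkB L g N)" using assms by (auto simp: in_lang_def)
  then have "sublist w (rkB L g (max N 1))" using sublist_rkB_mono[OF adm] by simp
  then obtain a b where ab: "rkB L g (max N 1) = a @ w @ b" by (auto simp: sublist_def)
  define n where "n = max N 1"
  have n1: "1 \<le> n" by (simp add: n_def)
  define i where "i = int (length a) - int (offset n)"
  have "w = window limit_point i (length w)"
  proof (rule nth_equalityI)
    show "length w = length (window limit_point i (length w))" by (simp add: window_def)
  next
    fix j assume "j < length w"
    have hl: "hgt n = length a + length w + length b" using ab by (simp add: hgt_def n_def)
    have "limit_point (i + int j) = rkB L g n ! nat (i + int j + int (offset n))"
      by (rule limit_point_eq[OF n1]) (use hl \<open>j < length w\<close> i_def in linarith)+
    also have "nat (i + int j + int (offset n)) = length a + j" by (simp add: i_def)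
    also have "rkB L g n ! (length a + j) = w ! j" using ab \<open>j < length w\<close> by (simp add: n_def nth_append)
    finally show "w ! j = window limit_point i (length w) ! j" using \<open>j < length w\<close> by (simp add: window_def)
  qed
  then show ?thesis by blast
qed

lemma complexity_eq_card_lang_words: "complexity (rkB L g) q = card (lang_words L g q)"
proof -
  have "{w. length w = q \<and> (\<exists>x\<in>subshift (rkB L g). \<exists>i. w = window x i q)} = lang_words L g q"
  proof
    show "{w. length w = q \<and> (\<exists>x\<in>subshift (rkB L g). \<exists>i. w = window x i q)} \<subseteq> lang_words L g q"
    proof
      fix w assume "w \<in> {w. length w = q \<and> (\<exists>x\<in>subshift (rkB L g). \<exists>i. w = window x i q)}"
      then obtain x i where w: "length w = q" "x \<in> subshift (rkB L g)" "w = window x i q" by blast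
      then have "\<forall>i m. \<exists>n\<ge>1. sublist (window x i m) (rkB L g n)" by (simp add: subshift_def)
      then obtain n where "sublist (window x i q) (rkB L g n)" by blast
      then show "w \<in> lang_words L g q" using w by (auto simp: lang_words_def in_lang_def)
    qed
  next
    show "lang_words L g q \<subseteq> {w. length w = q \<and> (\<exists>x\<in>subshift (rkB L g). \<exists>i. w = window x i q)}"
    proof
      fix w assume "w \<in> lang_words L g q"
      then have lw: "length w = q" "in_lang L g w" by (auto simp: lang_words_def)
      obtain i where "w = window limit_point i (length w)" using in_lang_window_limit_point[OF lw(2)] by blast
      then show "w \<in> {w. length w = q \<and> (\<exists>x\<in>subshift (rkB L g). \<exists>i. w = window x i q)}"
        using limit_point_in_subshift lw(1) by blast
    qed
  qed
  then show ?thesis by (simp add: complexity_def)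
qed

end

lemma complexity_Suc_diff:
  assumes adm: "admissible L g"
  shows "int (complexity (rkB L g) (Suc q)) - int (complexity (rkB L g) q) = int (card (rs_words L g q))"
  using card_lang_words_Suc[OF adm] by (simp add: complexity_eq_card_lang_words[OF adm])

lemma card_rs_words_first_level:
  assumes adm: "admissible L g" and r: "r \<le> length (rkB L g 2)"
  shows "card (rs_words L g r) = 1 + of_bool (2 * g 1 + 1 < r \<and> r \<le> 4 * g 1 + 1)"
proof -
  have "\<not> range_BB L g 1 r" by (simp add: range_BB_def)
  moreover have "range_long L g 1 r \<longleftrightarrow> 2 * g 1 + 1 < r \<and> r \<le> 4 * g 1 + 1"
    by (auto simp: range_long_def)
  ultimately show ?thesis
    using card_rs_words[OF adm, of 1 r] r by (simp add: numeral_2_eq_2)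
qed

lemma complexity_length_rkB_2:
  assumes adm: "admissible L g"
  shows "complexity (rkB L g) (length (rkB L g 2) + 1) = length (rkB L g 2) + 2 * g 1 + 2"
proof -
  let ?h = "length (rkB L g 2)" and ?P = "\<lambda>r. 2 * g 1 + 1 < r \<and> r \<le> 4 * g 1 + 1"
  have "2 * (2 * g 1 + 1) \<le> ?h"
    using mult_le_mono1[of 2 "L 1" "2 * g 1 + 1"] adm by (simp add: length_rkB_2 admissible_def)
  then have window: "{..?h} \<inter> {r. ?P r} = {2 * g 1 + 2 .. 4 * g 1 + 1}"
    by auto
  have "complexity (rkB L g) (?h + 1) = 1 + (\<Sum>r\<le>?h. card (rs_words L g r))"
    using card_lang_words_sum[OF adm] complexity_eq_card_lang_words[OF adm] lessThan_Suc_atMost by simp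
  also have "\<dots> = 1 + (\<Sum>r\<le>?h. 1 + of_bool (?P r))"
    using card_rs_words_first_level[OF adm] by simp
  also have "\<dots> = 1 + (?h + 1) + card ({..?h} \<inter> {r. ?P r})"
    by (subst sum.distrib) simp
  finally show ?thesis unfolding window by simp
qed

lemma le_two_minus_inverse_iff:
  assumes "1 \<le> l"
  shows "real q \<le> (2 - 1 / real l) * real h \<longleftrightarrow> l * q \<le> (2 * l - 1) * h"
proof -
  have l: "0 < real l" using assms by simp
  have "(2 - 1 / real l) * real h = (2 * real l - 1) * real h / real l"
    using l by (simp add: field_simps)
  then have "real q \<le> (2 - 1 / real l) * real h \<longleftrightarrow> real l * real q \<le> (2 * real l - 1) * real h"
    using l by (simp add: pos_le_divide_eq mult.commute)
  also have "2 * real l - 1 = real (2 * l - 1)" using assms by (simp add: of_nat_diff)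
  finally show ?thesis by (metis of_nat_le_iff of_nat_mult)
qed

lemma complexity_Suc_diff_level:
  assumes adm: "admissible L g" and n: "2 \<le> n" and q: "length (rkB L g n) < q" "q \<le> length (rkB L g (Suc n))"
  shows "int (complexity (rkB L g) (Suc q)) - int (complexity (rkB L g) q)
    = 1 + of_bool (real q \<le> (2 - 1 / real (L (n - 1))) * real (length (rkB L g n)))
        + of_bool ((g n + 1) * length (rkB L g n) + g n < q \<and> q \<le> (2 * g n + 1) * length (rkB L g n) + 2 * g n)"
proof -
  have "1 \<le> L (n - 1)" using admissibleD(1)[OF adm, of "n - 1"] n by linarith
  then have "range_BB L g n q \<longleftrightarrow> real q \<le> (2 - 1 / real (L (n - 1))) * real (length (rkB L g n))"
    using n q(1) by (simp add: range_BB_def le_two_minus_inverse_iff)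
  moreover have "range_long L g n q \<longleftrightarrow>
      (g n + 1) * length (rkB L g n) + g n < q \<and> q \<le> (2 * g n + 1) * length (rkB L g n) + 2 * g n"
    using n by (simp add: range_long_def)
  ultimately show ?thesis
    using complexity_Suc_diff[OF adm] card_rs_words[OF adm _ q(2)] n q(1) by simp
qed

lemma complexity_Suc_diff_cases:
  assumes adm: "admissible L g" and n: "2 \<le> n"
    and q: "length (rkB L g n) < q" "q \<le> length (rkB L g (Suc n))"
  defines "h \<equiv> length (rkB L g n)"
    and "d \<equiv> int (complexity (rkB L g) (q + 1)) - int (complexity (rkB L g) q)"
  shows "(real q \<le> (2 - 1 / real (L (n - 1))) * real h \<longrightarrow> d = 2) \<and>
    ((2 - 1 / real (L (n - 1))) * real h < real q \<and> q \<le> (g n + 1) * h + g n \<longrightarrow> d = 1) \<and>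
    ((g n + 1) * h + g n < q \<and> q \<le> (2 * g n + 1) * h + 2 * g n \<longrightarrow> d = 2) \<and>
    ((2 * g n + 1) * h + 2 * g n < q \<longrightarrow> d = 1)"
proof -
  have d: "d = 1 + of_bool (real q \<le> (2 - 1 / real (L (n - 1))) * real h)
      + of_bool ((g n + 1) * h + g n < q \<and> q \<le> (2 * g n + 1) * h + 2 * g n)"
    unfolding d_def h_def using complexity_Suc_diff_level[OF adm n q] by simp
  have "(2 - 1 / real (L (n - 1))) * real h \<le> 2 * real h"
    by (intro mult_right_mono) simp_all
  moreover have "2 * h \<le> (g n + 1) * h" using adm n by (simp add: admissible_def)
  ultimately have BB_bound: "real q \<le> (2 - 1 / real (L (n - 1))) * real h \<Longrightarrow> q \<le> (g n + 1) * h"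
    by linarith
  have "(g n + 1) * h \<le> (2 * g n + 1) * h" by simp
  then show ?thesis using d BB_bound by auto
qed

theorem proposition4:
  fixes L \<gamma> :: "nat \<Rightarrow> nat"
  assumes L: "\<And>n. n \<ge> 1 \<Longrightarrow> L n > 1"
      and g: "\<And>n. n \<ge> 1 \<Longrightarrow> \<gamma> n > 1"
  defines "h \<equiv> (\<lambda>n. length (rkB L \<gamma> n))"
      and "p \<equiv> complexity (rkB L \<gamma>)"
  shows "real (p (h 2 + 1)) = real (h 2) * (1 + 1 / real (L 1)) + 1 \<and>
    (\<forall>q n. h 2 < q \<and> 1 \<le> n \<and> h n < q \<and> q \<le> h (Suc n) \<longrightarrow>
          (real q \<le> (2 - 1 / real (L (n - 1))) * real (h n)
             \<longrightarrow> int (p (q + 1)) - int (p q) = 2) \<and>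
          ((2 - 1 / real (L (n - 1))) * real (h n) < real q \<and> q \<le> (\<gamma> n + 1) * h n + \<gamma> n
             \<longrightarrow> int (p (q + 1)) - int (p q) = 1) \<and>
          ((\<gamma> n + 1) * h n + \<gamma> n < q \<and> q \<le> (2 * \<gamma> n + 1) * h n + 2 * \<gamma> n
             \<longrightarrow> int (p (q + 1)) - int (p q) = 2) \<and>
          ((2 * \<gamma> n + 1) * h n + 2 * \<gamma> n < q
             \<longrightarrow> int (p (q + 1)) - int (p q) = 1))"
proof -
  have adm: "admissible L \<gamma>" unfolding admissible_def
  proof (intro allI impI conjI)
    fix n :: nat assume "1 \<le> n"
    then show "2 \<le> L n" "1 \<le> \<gamma> n" using L[of n] g[of n] by simp_all
  qed
  have "real (p (h 2 + 1)) = real (h 2) * (1 + 1 / real (L 1)) + 1"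
    using complexity_length_rkB_2[OF adm] length_rkB_2[of L \<gamma>] L[of 1]
    by (simp add: p_def h_def field_simps)
  moreover have "2 \<le> n" if "h 2 < q" "1 \<le> n" "q \<le> h (Suc n)" for q n
    using that by (cases "n = 1") (auto simp: numeral_2_eq_2)
  ultimately show ?thesis
    using complexity_Suc_diff_cases[OF adm] unfolding p_def h_def by blast
qed

end
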